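(* Let $D=(\alpha,\beta)_{\mathbb Q}$ be a quaternion division algebra and $p\neq2$ a prime with $v_p(\alpha)=v_p(\beta)=0$ and $\alpha$ a square in $\mathbb Q_p$. Identify $G_p$ with $\mathrm{SL}_2(\mathbb Q_p)$ via the isomorphism $x_1+x_2e_2+x_3e_3+x_4e_4\mapsto\begin{pmatrix}x_1+x_2\sqrt\alpha & \beta(x_3+x_4\sqrt\alpha)\\ x_3-x_4\sqrt\alpha & x_1-x_2\sqrt\alpha\end{pmatrix}$. Then the action of the norm-1 group $G$ of $D$ on the tree $\Delta_p$ of $\mathrm{SL}_2(\mathbb Q_p)$ is Weyl transitive.
   Context: $(\alpha,\beta)_{\mathbb Q}$ has basis $1,e_2,e_3,e_4$ with $e_2^2=\alpha$, $e_3^2=\beta$, $e_2e_3=-e_3e_2=e_4$ and norm $N(x)=x_1^2-\alpha x_2^2-\beta x_3^2+\alpha\beta x_4^2$; $D_p=D\otimes\mathbb Q_p$; $G$, $G_p$ are the norm-1 groups of $D$, $D_p$, and $G\subset G_p$. $\Delta_p$ is the Bruhat–Tits tree of $\mathrm{SL}_2(\mathbb Q_p)$ (vertices: homothety classes of $\mathbb Z_p$-lattices in $\mathbb Q_p^2$, adjacent if representatives satisfy $L\supset L'\supset pL$), a building whose chambers are edges, with infinite dihedral Weyl group $W$ and Weyl distance $\delta$. The action is Weyl transitive if for every $w\in W$, $G$ is transitive on pairs of chambers $(C,C')$ with $\delta(C,C')=w$. *)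

theory Defs
  imports Complex_Main "HOL-Computational_Algebra.Primes"
begin

definition pval :: "nat \<Rightarrow> rat \<Rightarrow> int" where
  "pval p q = (let (a, b) = quotient_of q in
     int (multiplicity (int p) a) - int (multiplicity (int p) b))"

text \<open>A field 'k of characteristic 0 with a valuation v (meaningful on nonzero
  elements) extending the p-adic valuation of Q, complete, and in which Q is dense.
  These properties characterise Q_p up to unique isomorphism.\<close>

definition is_Qp :: "nat \<Rightarrow> ('k::field_char_0 \<Rightarrow> int) \<Rightarrow> bool" where
  "is_Qp p v \<longleftrightarrow>
     (\<forall>x y. x \<noteq> 0 \<longrightarrow> y \<noteq> 0 \<longrightarrow> v (x * y) = v x + v y) \<and>
     (\<forall>x y. x \<noteq> 0 \<longrightarrow> y \<noteq> 0 \<longrightarrow> x + y \<noteq> 0 \<longrightarrow> v (x + y) \<ge> min (v x) (v y)) \<and>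
     (\<forall>q. q \<noteq> 0 \<longrightarrow> v (of_rat q) = pval p q) \<and>
     (\<forall>x N. \<exists>q. x = of_rat q \<or> v (x - of_rat q) \<ge> N) \<and>
     (\<forall>f :: nat \<Rightarrow> 'k.
        (\<forall>N. \<exists>M. \<forall>m\<ge>M. \<forall>n\<ge>M. f m = f n \<or> v (f m - f n) \<ge> N) \<longrightarrow>
        (\<exists>L. \<forall>N. \<exists>M. \<forall>n\<ge>M. f n = L \<or> v (f n - L) \<ge> N))"

definition Zp :: "('k::field_char_0 \<Rightarrow> int) \<Rightarrow> 'k set" where
  "Zp v = {x. x = 0 \<or> v x \<ge> 0}"

type_synonym quat = "rat \<times> rat \<times> rat \<times> rat"

fun qmult :: "rat \<Rightarrow> rat \<Rightarrow> quat \<Rightarrow> quat \<Rightarrow> quat" where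
  "qmult \<alpha> \<beta> (a1, a2, a3, a4) (b1, b2, b3, b4) =
     (a1*b1 + \<alpha>*a2*b2 + \<beta>*a3*b3 - \<alpha>*\<beta>*a4*b4,
      a1*b2 + a2*b1 - \<beta>*a3*b4 + \<beta>*a4*b3,
      a1*b3 + a3*b1 + \<alpha>*a2*b4 - \<alpha>*a4*b2,
      a1*b4 + a4*b1 + a2*b3 - a3*b2)"

fun qnorm :: "rat \<Rightarrow> rat \<Rightarrow> quat \<Rightarrow> rat" where
  "qnorm \<alpha> \<beta> (x1, x2, x3, x4) = x1^2 - \<alpha>*x2^2 - \<beta>*x3^2 + \<alpha>*\<beta>*x4^2"

definition quat_division_algebra :: "rat \<Rightarrow> rat \<Rightarrow> bool" where
  "quat_division_algebra \<alpha> \<beta> \<longleftrightarrow> \<alpha> \<noteq> 0 \<and> \<beta> \<noteq> 0 \<and>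
     (\<forall>x. x \<noteq> (0,0,0,0) \<longrightarrow> (\<exists>y. qmult \<alpha> \<beta> x y = (1,0,0,0)))"

definition normone :: "rat \<Rightarrow> rat \<Rightarrow> quat set" where
  "normone \<alpha> \<beta> = {x. qnorm \<alpha> \<beta> x = 1}"

text \<open>The identification G_p = SL_2(Q_p), with s a chosen square root of alpha;
  matrices act on column vectors (u1,u2).\<close>
fun quat_mat_act :: "rat \<Rightarrow> 'k::field_char_0 \<Rightarrow> quat \<Rightarrow> 'k \<times> 'k \<Rightarrow> 'k \<times> 'k" where
  "quat_mat_act \<beta> s (x1, x2, x3, x4) (u1, u2) =
     ((of_rat x1 + of_rat x2 * s) * u1 + of_rat \<beta> * (of_rat x3 + of_rat x4 * s) * u2,
      (of_rat x3 - of_rat x4 * s) * u1 + (of_rat x1 - of_rat x2 * s) * u2)"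

definition lattice_span :: "('k::field_char_0 \<Rightarrow> int) \<Rightarrow> 'k \<times> 'k \<Rightarrow> 'k \<times> 'k \<Rightarrow> ('k \<times> 'k) set" where
  "lattice_span v e f =
     {(x * fst e + y * fst f, x * snd e + y * snd f) | x y. x \<in> Zp v \<and> y \<in> Zp v}"

definition is_lattice :: "('k::field_char_0 \<Rightarrow> int) \<Rightarrow> ('k \<times> 'k) set \<Rightarrow> bool" where
  "is_lattice v L \<longleftrightarrow> (\<exists>e f. fst e * snd f - snd e * fst f \<noteq> 0 \<and> L = lattice_span v e f)"

definition scale_set :: "'k::field \<Rightarrow> ('k \<times> 'k) set \<Rightarrow> ('k \<times> 'k) set" where
  "scale_set c L = (\<lambda>u. (c * fst u, c * snd u)) ` L"

definition hclass :: "('k \<times> 'k) set \<Rightarrow> ('k::field \<times> 'k) set set" where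
  "hclass L = {scale_set c L | c. c \<noteq> 0}"

definition is_vertex :: "('k::field_char_0 \<Rightarrow> int) \<Rightarrow> ('k \<times> 'k) set set \<Rightarrow> bool" where
  "is_vertex v X \<longleftrightarrow> (\<exists>L. is_lattice v L \<and> X = hclass L)"

definition adjacent :: "nat \<Rightarrow> ('k::field_char_0 \<times> 'k) set set \<Rightarrow> ('k \<times> 'k) set set \<Rightarrow> bool" where
  "adjacent p X Y \<longleftrightarrow> (\<exists>L\<in>X. \<exists>L'\<in>Y. scale_set (of_nat p) L \<subseteq> L' \<and> L' \<subseteq> L)"

definition is_chamber :: "nat \<Rightarrow> ('k::field_char_0 \<Rightarrow> int) \<Rightarrow> ('k \<times> 'k) set set set \<Rightarrow> bool" where
  "is_chamber p v C \<longleftrightarrow>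
     (\<exists>X Y. is_vertex v X \<and> is_vertex v Y \<and> X \<noteq> Y \<and> adjacent p X Y \<and> C = {X, Y})"

text \<open>Type of a vertex: valuation of the determinant of a basis of a representing
  lattice, modulo 2 (the standard SL_2-invariant type function).\<close>
definition vertex_type :: "('k::field_char_0 \<Rightarrow> int) \<Rightarrow> ('k \<times> 'k) set set \<Rightarrow> int \<Rightarrow> bool" where
  "vertex_type v X t \<longleftrightarrow> (\<exists>e f. fst e * snd f - snd e * fst f \<noteq> 0 \<and>
       lattice_span v e f \<in> X \<and> t = v (fst e * snd f - snd e * fst f) mod 2)"

definition gallery :: "nat \<Rightarrow> ('k::field_char_0 \<Rightarrow> int) \<Rightarrow> ('k \<times> 'k) set set set list \<Rightarrow> bool" where
  "gallery p v cs \<longleftrightarrow> cs \<noteq> [] \<and> (\<forall>C\<in>set cs. is_chamber p v C) \<and>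
     (\<forall>i. Suc i < length cs \<longrightarrow> cs ! i \<noteq> cs ! Suc i \<and> cs ! i \<inter> cs ! Suc i \<noteq> {})"

text \<open>The infinite dihedral group W = <s_0, s_1> is represented by
  reduced words, i.e. lists of types; delta(C,C') = w holds iff w is the type
  sequence of the panels crossed by a minimal gallery from C to C'.\<close>
definition weyl_dist :: "nat \<Rightarrow> ('k::field_char_0 \<Rightarrow> int) \<Rightarrow> ('k \<times> 'k) set set set \<Rightarrow>
    ('k \<times> 'k) set set set \<Rightarrow> int list \<Rightarrow> bool" where
  "weyl_dist p v C C' w \<longleftrightarrow>
     (\<exists>cs. gallery p v cs \<and> hd cs = C \<and> last cs = C' \<and>
        (\<forall>cs'. gallery p v cs' \<and> hd cs' = C \<and> last cs' = C' \<longrightarrow> length cs \<le> length cs') \<and>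
        length w + 1 = length cs \<and>
        (\<forall>i < length w. \<exists>X. X \<in> cs ! i \<inter> cs ! Suc i \<and> vertex_type v X (w ! i)))"

definition vertex_act :: "('k \<times> 'k \<Rightarrow> 'k \<times> 'k) \<Rightarrow> ('k \<times> 'k) set set \<Rightarrow> ('k \<times> 'k) set set" where
  "vertex_act M X = (\<lambda>L. M ` L) ` X"

definition chamber_act :: "('k \<times> 'k \<Rightarrow> 'k \<times> 'k) \<Rightarrow> ('k \<times> 'k) set set set \<Rightarrow> ('k \<times> 'k) set set set" where
  "chamber_act M C = vertex_act M ` C"

definition weyl_transitive ::
  "nat \<Rightarrow> ('k::field_char_0 \<Rightarrow> int) \<Rightarrow> 'g set \<Rightarrow> ('g \<Rightarrow> 'k \<times> 'k \<Rightarrow> 'k \<times> 'k) \<Rightarrow> bool" where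
  "weyl_transitive p v G act \<longleftrightarrow>
     (\<forall>w C1 C1' C2 C2'. is_chamber p v C1 \<and> is_chamber p v C1' \<and>
        is_chamber p v C2 \<and> is_chamber p v C2' \<and>
        weyl_dist p v C1 C1' w \<and> weyl_dist p v C2 C2' w \<longrightarrow>
        (\<exists>g\<in>G. chamber_act (act g) C1 = C2 \<and> chamber_act (act g) C1' = C2'))"

end

theory Submission
  imports Defs "HOL-Library.Product_Plus"
begin

text \<open>
  \<open>SL\<^sub>2(\<bbbQ>\<^sub>p)\<close> acts Weyl transitively on its tree. A minimal gallery is determined by the
  non-backtracking path of vertices it crosses; \<open>GL\<^sub>2(\<bbbQ>\<^sub>p)\<close> moves the standard path
  \<open>[diag(p\<^sup>i, 1)]\<close> onto any such path, because the neighbours of a vertex correspond to the lines of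
  \<open>(\<int>/p)\<^sup>2\<close>; and a diagonal matrix fixing the standard path corrects the determinant to 1 once the
  parities of the vertex types agree. Stabilisers of vertices in \<open>SL\<^sub>2(\<bbbQ>\<^sub>p)\<close> are open, so it
  suffices that \<open>G\<close> is dense in \<open>G\<^sub>p = SL\<^sub>2(\<bbbQ>\<^sub>p)\<close>. This is weak approximation for the
  rational variety \<open>G\<close>: every \<open>y \<in> G\<^sub>p\<close> with \<open>y \<noteq> -1\<close> equals \<open>z / z\<^sup>*\<close> for \<open>z = 1 + y\<close>,
  the map \<open>z \<mapsto> z / z\<^sup>*\<close> is continuous where \<open>N(z) \<noteq> 0\<close>, and \<open>D\<close> is dense in \<open>D\<^sub>p\<close>.
\<close>

locale padic_field =
  fixes p :: nat and v :: "'k::field_char_0 \<Rightarrow> int"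
  assumes is_Qp: "is_Qp p v" and prime_p: "prime p"
begin

text \<open>\<open>val_ge K x\<close> says \<open>x \<in> p\<^sup>K \<int>\<^sub>p\<close>; the value \<open>v 0\<close> is junk and never consulted.\<close>

definition val_ge :: "int \<Rightarrow> 'k \<Rightarrow> bool" where
  "val_ge K x \<longleftrightarrow> x = 0 \<or> K \<le> v x"

abbreviation \<pi> :: 'k where "\<pi> \<equiv> of_nat p"

lemma v_mult: "x \<noteq> 0 \<Longrightarrow> y \<noteq> 0 \<Longrightarrow> v (x * y) = v x + v y"
  using is_Qp unfolding is_Qp_def by blast

lemma v_add_ge_min: "x \<noteq> 0 \<Longrightarrow> y \<noteq> 0 \<Longrightarrow> x + y \<noteq> 0 \<Longrightarrow> min (v x) (v y) \<le> v (x + y)"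
  using is_Qp unfolding is_Qp_def by blast

lemma v_of_rat: "q \<noteq> 0 \<Longrightarrow> v (of_rat q) = pval p q"
  using is_Qp unfolding is_Qp_def by blast

lemma v_one [simp]: "v 1 = 0"
  using v_mult[of 1 1] by simp

lemma v_minus_one [simp]: "v (- 1) = 0"
  using v_mult[of "- 1" "- 1"] by simp

lemma v_uminus [simp]: "v (- x) = v x"
  using v_mult[of "- 1" x] by (cases "x = 0") simp_all

lemma v_inverse: "x \<noteq> 0 \<Longrightarrow> v (inverse x) = - v x"
  using v_mult[of x "inverse x"] by simp

lemma v_divide: "x \<noteq> 0 \<Longrightarrow> y \<noteq> 0 \<Longrightarrow> v (x / y) = v x - v y"
  by (simp add: divide_inverse v_mult v_inverse)

lemma p_nonzero [simp]: "p \<noteq> 0"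
  using prime_gt_0_nat[OF prime_p] by simp

lemma uniformizer_nonzero [simp]: "\<pi> \<noteq> 0"
  by simp

lemma v_uniformizer [simp]: "v \<pi> = 1"
proof -
  have "multiplicity (int p) (int p) = 1"
    using prime_p prime_gt_1_nat[OF prime_p] by (intro multiplicity_self) auto
  moreover have "v (of_rat (of_nat p)) = pval p (of_nat p)"
    using prime_gt_0_nat[OF prime_p] by (intro v_of_rat) auto
  ultimately show ?thesis by (simp add: pval_def)
qed

lemma v_uniformizer_power [simp]: "v (\<pi> ^ n) = int n"
  by (induction n) (simp_all add: v_mult[of \<pi> "\<pi> ^ _"])

lemma ex_nonzero_val: "\<exists>l. l \<noteq> 0 \<and> v l = j"
proof (cases "j \<ge> 0")
  case True
  then show ?thesis by (intro exI[of _ "\<pi> ^ nat j"]) auto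
next
  case False
  then show ?thesis by (intro exI[of _ "inverse (\<pi> ^ nat (- j))"]) (auto simp: v_inverse)
qed

lemma ex_rat_close: "\<exists>q. val_ge N (of_rat q - x)"
proof -
  obtain q where "x = of_rat q \<or> N \<le> v (x - of_rat q)"
    using is_Qp unfolding is_Qp_def by blast
  then have "val_ge N (of_rat q - x)"
    unfolding val_ge_def by (metis minus_diff_eq v_uminus right_minus_eq)
  then show ?thesis ..
qed

lemma val_ge_0 [simp]: "val_ge K 0"
  by (simp add: val_ge_def)

lemma val_ge_1: "val_ge 0 1"
  by (simp add: val_ge_def)

lemma val_ge_add: "val_ge K x \<Longrightarrow> val_ge K y \<Longrightarrow> val_ge K (x + y)"
  unfolding val_ge_def using v_add_ge_min[of x y] by fastforce

lemma val_ge_uminus_iff [simp]: "val_ge K (- x) \<longleftrightarrow> val_ge K x"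
  by (simp add: val_ge_def)

lemma val_ge_diff: "val_ge K x \<Longrightarrow> val_ge K y \<Longrightarrow> val_ge K (x - y)"
  using val_ge_add[of K x "- y"] by simp

lemma val_ge_diff_commute: "val_ge K (x - y) \<longleftrightarrow> val_ge K (y - x)"
  by (metis minus_diff_eq val_ge_uminus_iff)

lemma val_ge_mult: "val_ge K x \<Longrightarrow> val_ge L y \<Longrightarrow> val_ge (K + L) (x * y)"
  unfolding val_ge_def by (cases "x = 0"; cases "y = 0") (auto simp: v_mult)

lemma val_ge_mult_integral: "val_ge 0 x \<Longrightarrow> val_ge 0 y \<Longrightarrow> val_ge 0 (x * y)"
  using val_ge_mult[of 0 x 0 y] by simp

lemma val_ge_mono: "val_ge K x \<Longrightarrow> L \<le> K \<Longrightarrow> val_ge L x"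
  unfolding val_ge_def by auto

lemma val_ge_uniformizer_power: "val_ge (int n) (\<pi> ^ n)"
  by (simp add: val_ge_def)

lemma ex_val_ge_le: "\<exists>K \<le> M. val_ge K x"
  unfolding val_ge_def by (cases "x = 0") (auto intro: exI[of _ "min M (v x)"])

lemma val_ge_Suc_iff: "val_ge (K + 1) x \<longleftrightarrow> val_ge K (x / \<pi>)"
  unfolding val_ge_def by (cases "x = 0") (auto simp: v_divide)

lemma val_ge_1_iff: "val_ge 1 x \<longleftrightarrow> val_ge 0 (x / \<pi>)"
  using val_ge_Suc_iff[of 0 x] by simp

lemma val_ge_uniformizer_mult: "val_ge 0 y \<Longrightarrow> val_ge 1 (\<pi> * y)"
  using val_ge_mult[of 1 \<pi> 0 y] by (simp add: val_ge_def)

lemma nonzero_if_not_val_ge_1: "\<not> val_ge 1 x \<Longrightarrow> x \<noteq> 0"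
  unfolding val_ge_def by auto

lemma val_ge_inverse: "x \<noteq> 0 \<Longrightarrow> val_ge (- v x) (inverse x)"
  unfolding val_ge_def by (auto simp: v_inverse)

lemma unit_inverse_integral: "val_ge 0 x \<Longrightarrow> \<not> val_ge 1 x \<Longrightarrow> val_ge 0 (inverse x)"
  unfolding val_ge_def by (auto simp: v_inverse)

lemma v_eq_if_close:
  assumes "a \<noteq> 0" and "val_ge (v a + 1) (b - a)"
  shows "b \<noteq> 0" and "v b = v a"
proof -
  show "b \<noteq> 0"
    using assms unfolding val_ge_def by auto
  show "v b = v a"
  proof (cases "b = a")
    case False
    have "v a + 1 \<le> v (b - a)"
      using assms False unfolding val_ge_def by auto
    moreover have "min (v a) (v (b - a)) \<le> v b"
      using v_add_ge_min[of a "b - a"] False \<open>b \<noteq> 0\<close> assms(1) by simp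
    moreover have "min (v b) (v (a - b)) \<le> v a"
      using v_add_ge_min[of b "- (b - a)"] False \<open>b \<noteq> 0\<close> assms(1) by simp
    moreover have "v (a - b) = v (b - a)"
      by (metis minus_diff_eq v_uminus)
    ultimately show ?thesis by linarith
  qed simp
qed

end

text \<open>A 2\<times>2 matrix \<open>(a, b, c, d)\<close> stands for \<open>[[a, b], [c, d]]\<close>, acting on column vectors.\<close>

type_synonym 'a mat2 = "'a \<times> 'a \<times> 'a \<times> 'a"

fun mat_apply :: "'a::comm_ring_1 mat2 \<Rightarrow> 'a \<times> 'a \<Rightarrow> 'a \<times> 'a" where
  "mat_apply (a, b, c, d) (x, y) = (a * x + b * y, c * x + d * y)"

fun mat_mult :: "'a::comm_ring_1 mat2 \<Rightarrow> 'a mat2 \<Rightarrow> 'a mat2" where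
  "mat_mult (a, b, c, d) (e, f, g, h) = (a * e + b * g, a * f + b * h, c * e + d * g, c * f + d * h)"

fun mat_det :: "'a::comm_ring_1 mat2 \<Rightarrow> 'a" where
  "mat_det (a, b, c, d) = a * d - b * c"

fun mat_inv :: "'a::field mat2 \<Rightarrow> 'a mat2" where
  "mat_inv (a, b, c, d) = (d / (a * d - b * c), - b / (a * d - b * c), - c / (a * d - b * c), a / (a * d - b * c))"

definition mat_one :: "'a::comm_ring_1 mat2" where
  "mat_one = (1, 0, 0, 1)"

definition mat_scalar :: "'a::comm_ring_1 \<Rightarrow> 'a mat2" where
  "mat_scalar c = (c, 0, 0, c)"

lemma mat_apply_mult: "mat_apply (mat_mult A B) u = mat_apply A (mat_apply B u)"
  by (cases A; cases B; cases u) (simp add: algebra_simps)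

lemma image_mat_apply_mult: "mat_apply A ` mat_apply B ` S = mat_apply (mat_mult A B) ` S"
  by (auto simp: mat_apply_mult image_iff)

lemma mat_apply_one [simp]: "mat_apply mat_one u = u"
  by (cases u) (simp add: mat_one_def)

lemma mat_mult_assoc: "mat_mult (mat_mult A B) C = mat_mult A (mat_mult B C)"
  by (cases A; cases B; cases C) (simp add: algebra_simps)

lemma mat_mult_one [simp]: "mat_mult mat_one A = A" "mat_mult A mat_one = A"
  by (cases A; simp add: mat_one_def)+

lemma mat_mult_add_left: "mat_mult (A + B) C = mat_mult A C + mat_mult B C"
  by (cases A; cases B; cases C) (simp add: algebra_simps)

lemma mat_mult_add_right: "mat_mult A (B + C) = mat_mult A B + mat_mult A C"
  by (cases A; cases B; cases C) (simp add: algebra_simps)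

lemma mat_det_mult: "mat_det (mat_mult A B) = mat_det A * mat_det B"
  by (cases A; cases B) (simp add: algebra_simps)

lemma mat_det_one [simp]: "mat_det mat_one = 1"
  by (simp add: mat_one_def)

lemma mat_det_scalar [simp]: "mat_det (mat_scalar c) = c * c"
  by (simp add: mat_scalar_def)

lemma mat_mult_inv_right: "mat_det A \<noteq> 0 \<Longrightarrow> mat_mult A (mat_inv A) = mat_one"
  by (cases A) (simp add: mat_one_def add_divide_distrib[symmetric] diff_divide_distrib[symmetric] algebra_simps)

lemma mat_mult_inv_left: "mat_det A \<noteq> 0 \<Longrightarrow> mat_mult (mat_inv A) A = mat_one"
  by (cases A) (simp add: mat_one_def add_divide_distrib[symmetric] diff_divide_distrib[symmetric] algebra_simps)

lemma mat_det_inv: "mat_det A \<noteq> 0 \<Longrightarrow> mat_det (mat_inv A) = 1 / mat_det A"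
  using mat_det_mult[of A "mat_inv A"] mat_mult_inv_right[of A] by (simp add: field_simps)

lemma mat_apply_scalar: "mat_apply (mat_scalar c) u = (c * fst u, c * snd u)"
  by (cases u) (simp add: mat_scalar_def)

lemma mat_mult_scalar_commute: "mat_mult (mat_scalar c) A = mat_mult A (mat_scalar c)"
  by (cases A) (simp add: mat_scalar_def algebra_simps)

section \<open>Lattices and vertices\<close>

context padic_field
begin

definition std_lattice :: "('k \<times> 'k) set" where
  "std_lattice = {u. val_ge 0 (fst u) \<and> val_ge 0 (snd u)}"

abbreviation lattice_of :: "'k mat2 \<Rightarrow> ('k \<times> 'k) set" where
  "lattice_of B \<equiv> mat_apply B ` std_lattice"

fun entries_val_ge :: "int \<Rightarrow> 'k mat2 \<Rightarrow> bool" where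
  "entries_val_ge K (a, b, c, d) \<longleftrightarrow> val_ge K a \<and> val_ge K b \<and> val_ge K c \<and> val_ge K d"

abbreviation mat_integral :: "'k mat2 \<Rightarrow> bool" where
  "mat_integral \<equiv> entries_val_ge 0"

lemma mem_std_lattice [simp]: "(x, y) \<in> std_lattice \<longleftrightarrow> val_ge 0 x \<and> val_ge 0 y"
  by (simp add: std_lattice_def)

lemma lattice_span_eq: "lattice_span v e f = lattice_of (fst e, fst f, snd e, snd f)"
proof -
  have "Zp v = {x. val_ge 0 x}"
    by (auto simp: Zp_def val_ge_def)
  then show ?thesis
    unfolding lattice_span_def std_lattice_def by (cases e; cases f) (force simp: image_iff algebra_simps)
qed

lemma is_lattice_iff: "is_lattice v L \<longleftrightarrow> (\<exists>B. mat_det B \<noteq> 0 \<and> L = lattice_of B)"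
proof
  assume "is_lattice v L"
  then obtain e f where "fst e * snd f - snd e * fst f \<noteq> 0" "L = lattice_span v e f"
    unfolding is_lattice_def by blast
  then show "\<exists>B. mat_det B \<noteq> 0 \<and> L = lattice_of B"
    by (intro exI[of _ "(fst e, fst f, snd e, snd f)"]) (auto simp: lattice_span_eq algebra_simps)
next
  assume "\<exists>B. mat_det B \<noteq> 0 \<and> L = lattice_of B"
  then obtain a b c d where "mat_det (a, b, c, d) \<noteq> 0" "L = lattice_of (a, b, c, d)"
    by (metis prod_cases4)
  then show "is_lattice v L"
    unfolding is_lattice_def
    by (intro exI[of _ "(a, c)"] exI[of _ "(b, d)"]) (simp add: lattice_span_eq mult.commute)
qed

lemma scale_set_eq_image: "scale_set c L = mat_apply (mat_scalar c) ` L"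
  unfolding scale_set_def by (auto simp: mat_apply_scalar)

lemma mat_apply_integral: "mat_integral U \<Longrightarrow> u \<in> std_lattice \<Longrightarrow> mat_apply U u \<in> std_lattice"
  by (cases U; cases u) (auto intro!: val_ge_add val_ge_mult_integral)

lemma std_lattice_unimodular:
  assumes "mat_integral U" "mat_integral U'" "mat_mult U U' = mat_one"
  shows "lattice_of U = std_lattice"
proof
  show "lattice_of U \<subseteq> std_lattice"
    using mat_apply_integral[OF assms(1)] by blast
  show "std_lattice \<subseteq> lattice_of U"
  proof
    fix u assume "u \<in> std_lattice"
    then have "mat_apply U' u \<in> std_lattice"
      using assms(2) mat_apply_integral by blast
    moreover have "u = mat_apply U (mat_apply U' u)"
      using assms(3) by (simp flip: mat_apply_mult)
    ultimately show "u \<in> lattice_of U" by blast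
  qed
qed

lemma lattice_subset_imp_integral_factor:
  assumes "lattice_of A \<subseteq> lattice_of B"
  shows "\<exists>U. mat_integral U \<and> A = mat_mult B U"
proof -
  have "(1, 0) \<in> std_lattice" "(0, 1) \<in> std_lattice"
    by (auto simp: val_ge_1)
  then obtain u1 u2 where u: "u1 \<in> std_lattice" "u2 \<in> std_lattice"
      and A: "mat_apply A (1, 0) = mat_apply B u1" "mat_apply A (0, 1) = mat_apply B u2"
    using assms by blast
  obtain x1 y1 x2 y2 where "u1 = (x1, y1)" "u2 = (x2, y2)"
    by fastforce
  with u A show ?thesis
    by (intro exI[of _ "(x1, x2, y1, y2)"]) (cases A; cases B; simp)
qed

lemma lattice_of_add:
  assumes "(a, b) \<in> lattice_of C" "(c, d) \<in> lattice_of C"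
  shows "(a + c, b + d) \<in> lattice_of C"
proof -
  obtain x y x' y' where "(x, y) \<in> std_lattice" "(x', y') \<in> std_lattice"
      "(a, b) = mat_apply C (x, y)" "(c, d) = mat_apply C (x', y')"
    using assms by auto
  then show ?thesis
    by (cases C) (auto simp: image_iff algebra_simps intro!: bexI[of _ "(x + x', y + y')"] val_ge_add)
qed

lemma lattice_of_smul:
  assumes "val_ge 0 r" "(a, b) \<in> lattice_of C"
  shows "(r * a, r * b) \<in> lattice_of C"
proof -
  obtain x y where "(x, y) \<in> std_lattice" "(a, b) = mat_apply C (x, y)"
    using assms by auto
  then show ?thesis
    using assms(1)
    by (cases C) (auto simp: image_iff algebra_simps intro!: bexI[of _ "(r * x, r * y)"] val_ge_mult_integral)
qed

lemma lattice_of_diff: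
  "(a, b) \<in> lattice_of C \<Longrightarrow> (c, d) \<in> lattice_of C \<Longrightarrow> (a - c, b - d) \<in> lattice_of C"
  using lattice_of_add[of a b C "- c" "- d"] lattice_of_smul[of "- 1" c d C] val_ge_1 by simp

lemma scale_set_scale_set: "scale_set c (scale_set d L) = scale_set (c * d) L"
  unfolding scale_set_def image_image by (simp add: mult.assoc)

lemma hclass_self: "L \<in> hclass L"
  unfolding hclass_def scale_set_def by (auto intro: exI[of _ 1])

lemma hclass_scale_set:
  assumes "c \<noteq> 0"
  shows "hclass (scale_set c L) = hclass L"
proof -
  have "scale_set d L \<in> hclass (scale_set c L)" if "d \<noteq> 0" for d
  proof -
    have "scale_set d L = scale_set (d / c) (scale_set c L)"
      using assms by (simp add: scale_set_scale_set)
    then show ?thesis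
      unfolding hclass_def using that assms by auto
  qed
  moreover have "scale_set d (scale_set c L) \<in> hclass L" if "d \<noteq> 0" for d
    unfolding hclass_def scale_set_scale_set using that assms by auto
  ultimately show ?thesis
    unfolding hclass_def by blast
qed

lemma hclass_eq_if_mem: "L' \<in> hclass L \<Longrightarrow> hclass L' = hclass L"
  unfolding hclass_def using hclass_scale_set unfolding hclass_def by blast

lemma hclass_mat_scalar: "c \<noteq> 0 \<Longrightarrow> hclass (lattice_of (mat_mult (mat_scalar c) B)) = hclass (lattice_of B)"
  using hclass_scale_set[of c "lattice_of B"] by (simp add: scale_set_eq_image image_mat_apply_mult)

lemma hclass_unimodular:
  assumes "A = mat_mult B U" "mat_integral U" "mat_integral U'" "mat_mult U U' = mat_one"
  shows "hclass (lattice_of A) = hclass (lattice_of B)"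
  using std_lattice_unimodular[OF assms(2-4)] assms(1) by (simp flip: image_mat_apply_mult)

lemma is_vertex_iff: "is_vertex v X \<longleftrightarrow> (\<exists>B. mat_det B \<noteq> 0 \<and> X = hclass (lattice_of B))"
  unfolding is_vertex_def is_lattice_iff by blast

lemma vertex_act_hclass: "vertex_act (mat_apply g) (hclass L) = hclass (mat_apply g ` L)"
proof -
  have "mat_apply g ` scale_set c L = scale_set c (mat_apply g ` L)" for c
    unfolding scale_set_eq_image image_mat_apply_mult by (simp add: mat_mult_scalar_commute)
  then show ?thesis
    unfolding vertex_act_def hclass_def by auto
qed

lemma vertex_act_mult:
  "vertex_act (mat_apply (mat_mult A B)) X = vertex_act (mat_apply A) (vertex_act (mat_apply B) X)"
  unfolding vertex_act_def image_image by (simp add: mat_apply_mult image_image)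

lemma vertex_act_one [simp]: "vertex_act (mat_apply mat_one) X = X"
  unfolding vertex_act_def by simp

lemma vertex_act_inv_left:
  "mat_det g \<noteq> 0 \<Longrightarrow> vertex_act (mat_apply (mat_inv g)) (vertex_act (mat_apply g) X) = X"
  by (simp flip: vertex_act_mult add: mat_mult_inv_left)

lemma vertex_act_inv_right:
  "mat_det g \<noteq> 0 \<Longrightarrow> vertex_act (mat_apply g) (vertex_act (mat_apply (mat_inv g)) X) = X"
  by (simp flip: vertex_act_mult add: mat_mult_inv_right)

lemma chamber_act_mult:
  "chamber_act (mat_apply (mat_mult A B)) C = chamber_act (mat_apply A) (chamber_act (mat_apply B) C)"
  unfolding chamber_act_def by (auto simp: vertex_act_mult image_image)

lemma chamber_act_pair: "chamber_act f {X, Y} = {vertex_act f X, vertex_act f Y}"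
  unfolding chamber_act_def by simp

lemma is_vertex_vertex_act:
  assumes "mat_det g \<noteq> 0" "is_vertex v X"
  shows "is_vertex v (vertex_act (mat_apply g) X)"
proof -
  obtain B where B: "mat_det B \<noteq> 0" "X = hclass (lattice_of B)"
    using assms(2) is_vertex_iff by blast
  then have "vertex_act (mat_apply g) X = hclass (lattice_of (mat_mult g B))"
    by (simp add: vertex_act_hclass image_mat_apply_mult)
  moreover have "mat_det (mat_mult g B) \<noteq> 0"
    using B assms(1) by (simp add: mat_det_mult)
  ultimately show ?thesis
    unfolding is_vertex_iff by blast
qed

lemma adjacent_sym:
  fixes X Y :: "('k \<times> 'k) set set"
  assumes "is_vertex v X" "adjacent p X Y"
  shows "adjacent p Y X"
proof -
  obtain L L' where LL: "L \<in> X" "L' \<in> Y" "scale_set \<pi> L \<subseteq> L'" "L' \<subseteq> L"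
    using assms(2) unfolding adjacent_def by blast
  obtain L1 where "X = hclass L1"
    using assms(1) unfolding is_vertex_def by blast
  then have "scale_set \<pi> L \<in> X"
    using LL(1) hclass_eq_if_mem hclass_scale_set[of \<pi> L] hclass_self by (metis uniformizer_nonzero)
  moreover have "scale_set \<pi> L' \<subseteq> scale_set \<pi> L"
    using LL(4) unfolding scale_set_def by auto
  ultimately show ?thesis
    unfolding adjacent_def using LL by blast
qed

lemma adjacent_vertex_act:
  fixes X Y :: "('k \<times> 'k) set set"
  assumes "adjacent p X Y"
  shows "adjacent p (vertex_act (mat_apply g) X) (vertex_act (mat_apply g) Y)"
proof -
  obtain L L' where LL: "L \<in> X" "L' \<in> Y" "scale_set \<pi> L \<subseteq> L'" "L' \<subseteq> L"
    using assms unfolding adjacent_def by blast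
  have "mat_apply g ` scale_set \<pi> L = scale_set \<pi> (mat_apply g ` L)"
    unfolding scale_set_eq_image image_mat_apply_mult by (simp add: mat_mult_scalar_commute)
  then have "scale_set \<pi> (mat_apply g ` L) \<subseteq> mat_apply g ` L'" "mat_apply g ` L' \<subseteq> mat_apply g ` L"
    using LL by (metis image_mono)+
  moreover have "mat_apply g ` L \<in> vertex_act (mat_apply g) X" "mat_apply g ` L' \<in> vertex_act (mat_apply g) Y"
    using LL unfolding vertex_act_def by auto
  ultimately show ?thesis
    unfolding adjacent_def by blast
qed

section \<open>Neighbours of a vertex\<close>

lemma mem_scaled_std_lattice: "(x, y) \<in> scale_set \<pi> std_lattice \<longleftrightarrow> val_ge 1 x \<and> val_ge 1 y"
proof
  assume "(x, y) \<in> scale_set \<pi> std_lattice"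
  then obtain a b where "val_ge 0 a" "val_ge 0 b" "x = \<pi> * a" "y = \<pi> * b"
    unfolding scale_set_def std_lattice_def by auto
  then show "val_ge 1 x \<and> val_ge 1 y"
    using val_ge_uniformizer_mult by auto
next
  assume "val_ge 1 x \<and> val_ge 1 y"
  then have "(x / \<pi>, y / \<pi>) \<in> std_lattice"
    by (simp add: val_ge_1_iff)
  moreover have "(x, y) = (\<lambda>u. (\<pi> * fst u, \<pi> * snd u)) (x / \<pi>, y / \<pi>)"
    by simp
  ultimately show "(x, y) \<in> scale_set \<pi> std_lattice"
    unfolding scale_set_def by (rule image_eqI[rotated])
qed

lemma mem_lattice_diag: "(x, y) \<in> lattice_of (\<pi>, 0, 0, 1) \<longleftrightarrow> val_ge 1 x \<and> val_ge 0 y"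
proof
  assume "(x, y) \<in> lattice_of (\<pi>, 0, 0, 1)"
  then show "val_ge 1 x \<and> val_ge 0 y"
    using val_ge_uniformizer_mult by auto
next
  assume xy: "val_ge 1 x \<and> val_ge 0 y"
  have "(x, y) = mat_apply (\<pi>, 0, 0, 1) (x / \<pi>, y)"
    by simp
  then show "(x, y) \<in> lattice_of (\<pi>, 0, 0, 1)"
    using xy by (metis image_eqI mem_std_lattice val_ge_1_iff)
qed

lemma mem_lattice_slope:
  assumes "val_ge 0 t"
  shows "(x, y) \<in> lattice_of (1, 0, t, \<pi>) \<longleftrightarrow> val_ge 0 x \<and> val_ge 1 (y - t * x)"
proof
  assume "(x, y) \<in> lattice_of (1, 0, t, \<pi>)"
  then show "val_ge 0 x \<and> val_ge 1 (y - t * x)"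
    using val_ge_uniformizer_mult by auto
next
  assume xy: "val_ge 0 x \<and> val_ge 1 (y - t * x)"
  have "(x, y) = mat_apply (1, 0, t, \<pi>) (x, (y - t * x) / \<pi>)"
    by simp
  then show "(x, y) \<in> lattice_of (1, 0, t, \<pi>)"
    using xy by (metis image_eqI mem_std_lattice val_ge_1_iff)
qed

lemma std_lattice_subset_if_basis:
  assumes "(1, 0) \<in> lattice_of C" "(0, 1) \<in> lattice_of C"
  shows "std_lattice \<subseteq> lattice_of C"
proof
  fix u assume "u \<in> std_lattice"
  then obtain a b where u: "u = (a, b)" "val_ge 0 a" "val_ge 0 b"
    by (cases u) auto
  then have "(a * 1, a * 0) \<in> lattice_of C" "(b * 0, b * 1) \<in> lattice_of C"
    using assms lattice_of_smul by blast+
  then have "(a * 1 + b * 0, a * 0 + b * 1) \<in> lattice_of C"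
    by (rule lattice_of_add)
  then show "u \<in> lattice_of C"
    using u by simp
qed

lemma lattice_of_divide_unit:
  assumes "val_ge 0 r" "\<not> val_ge 1 r" "(a, b) \<in> lattice_of C"
  shows "(a / r, b / r) \<in> lattice_of C"
  using lattice_of_smul[OF unit_inverse_integral[OF assms(1,2)] assms(3)]
  by (simp add: divide_inverse mult.commute)

lemma slope_lattice_subset:
  assumes piL: "scale_set \<pi> std_lattice \<subseteq> lattice_of C" and t: "val_ge 0 t" and e: "(1, t) \<in> lattice_of C"
  shows "lattice_of (1, 0, t, \<pi>) \<subseteq> lattice_of C"
proof
  fix u assume u: "u \<in> lattice_of (1, 0, t, \<pi>)"
  obtain a b where ab: "u = (a, b)"
    by fastforce
  with u have a: "val_ge 0 a" and b: "val_ge 1 (b - t * a)"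
    using mem_lattice_slope[OF t, of a b] by simp_all
  have "(a * 1, a * t) \<in> lattice_of C"
    using lattice_of_smul[OF a e] .
  moreover have "(0, b - t * a) \<in> lattice_of C"
    using subsetD[OF piL] b by (simp add: mem_scaled_std_lattice)
  ultimately have "(a * 1 + 0, a * t + (b - t * a)) \<in> lattice_of C"
    by (rule lattice_of_add)
  then show "u \<in> lattice_of C"
    using ab by (simp add: mult.commute)
qed

lemma diag_lattice_subset:
  assumes piL: "scale_set \<pi> std_lattice \<subseteq> lattice_of C" and e: "(0, 1) \<in> lattice_of C"
  shows "lattice_of (\<pi>, 0, 0, 1) \<subseteq> lattice_of C"
proof
  fix u assume u: "u \<in> lattice_of (\<pi>, 0, 0, 1)"
  obtain a b where ab: "u = (a, b)"
    by fastforce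
  with u have a: "val_ge 1 a" and b: "val_ge 0 b"
    using mem_lattice_diag[of a b] by simp_all
  have "(a, 0) \<in> lattice_of C"
    using subsetD[OF piL] a by (simp add: mem_scaled_std_lattice)
  moreover have "(b * 0, b * 1) \<in> lattice_of C"
    using lattice_of_smul[OF b e] .
  ultimately have "(a + b * 0, 0 + b * 1) \<in> lattice_of C"
    by (rule lattice_of_add)
  then show "u \<in> lattice_of C"
    using ab by simp
qed

lemma lattice_between_unit_first:
  assumes piL: "scale_set \<pi> std_lattice \<subseteq> lattice_of C" and sub: "lattice_of C \<subseteq> std_lattice"
    and xy: "(x, y) \<in> lattice_of C" and x: "\<not> val_ge 1 x"
  shows "\<exists>t. val_ge 0 t \<and> (lattice_of C = std_lattice \<or> lattice_of C = lattice_of (1, 0, t, \<pi>))"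
proof -
  define t where "t = y / x"
  have xy0: "val_ge 0 x" "val_ge 0 y"
    using subsetD[OF sub xy] by simp_all
  then have t: "val_ge 0 t"
    unfolding t_def divide_inverse using x by (intro val_ge_mult_integral unit_inverse_integral)
  have e: "(1, t) \<in> lattice_of C"
    using lattice_of_divide_unit[OF xy0(1) x xy] nonzero_if_not_val_ge_1[OF x] by (simp add: t_def)
  show ?thesis
  proof (cases "lattice_of C \<subseteq> lattice_of (1, 0, t, \<pi>)")
    case True
    then show ?thesis
      using slope_lattice_subset[OF piL t e] t by blast
  next
    case False
    then obtain a b where ab: "(a, b) \<in> lattice_of C" "(a, b) \<notin> lattice_of (1, 0, t, \<pi>)"
      by auto
    define r where "r = b - t * a"
    have ab0: "val_ge 0 a" "val_ge 0 b"
      using subsetD[OF sub ab(1)] by simp_all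
    then have r: "val_ge 0 r" "\<not> val_ge 1 r"
      using ab(2) t mem_lattice_slope[OF t] unfolding r_def by (auto intro: val_ge_diff val_ge_mult_integral)
    have "(a - a * 1, b - a * t) \<in> lattice_of C"
      using lattice_of_diff[OF ab(1) lattice_of_smul[OF ab0(1) e]] .
    then have "(0, r) \<in> lattice_of C"
      by (simp add: r_def mult.commute)
    from lattice_of_divide_unit[OF r this] have e2: "(0, 1) \<in> lattice_of C"
      using nonzero_if_not_val_ge_1[OF r(2)] by simp
    have "(1 - t * 0, t - t * 1) \<in> lattice_of C"
      using lattice_of_diff[OF e lattice_of_smul[OF t e2]] .
    then have "(1, 0) \<in> lattice_of C"
      by simp
    then show ?thesis
      using std_lattice_subset_if_basis e2 sub t by blast
  qed
qed

lemma lattice_between_nonunit_first: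
  assumes piL: "scale_set \<pi> std_lattice \<subseteq> lattice_of C" and sub: "lattice_of C \<subseteq> std_lattice"
    and first: "\<And>x y. (x, y) \<in> lattice_of C \<Longrightarrow> val_ge 1 x"
  shows "lattice_of C = scale_set \<pi> std_lattice \<or> lattice_of C = lattice_of (\<pi>, 0, 0, 1)"
proof (cases "\<exists>x y. (x, y) \<in> lattice_of C \<and> \<not> val_ge 1 y")
  case True
  then obtain x y where xy: "(x, y) \<in> lattice_of C" "\<not> val_ge 1 y"
    by blast
  have y: "val_ge 0 y"
    using subsetD[OF sub xy(1)] by simp
  have "(x / y, y / y) \<in> lattice_of C"
    using lattice_of_divide_unit[OF y xy(2,1)] .
  moreover have "(x / y, 0) \<in> lattice_of C"
    using subsetD[OF piL] val_ge_mult[OF first[OF xy(1)] unit_inverse_integral[OF y xy(2)]]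
    by (simp add: mem_scaled_std_lattice divide_inverse)
  ultimately have "(x / y - x / y, y / y - 0) \<in> lattice_of C"
    by (rule lattice_of_diff)
  then have "(0, 1) \<in> lattice_of C"
    using nonzero_if_not_val_ge_1[OF xy(2)] by simp
  then have "lattice_of (\<pi>, 0, 0, 1) \<subseteq> lattice_of C"
    by (rule diag_lattice_subset[OF piL])
  moreover have "lattice_of C \<subseteq> lattice_of (\<pi>, 0, 0, 1)"
  proof
    fix u assume u: "u \<in> lattice_of C"
    obtain a b where "u = (a, b)"
      by fastforce
    with u show "u \<in> lattice_of (\<pi>, 0, 0, 1)"
      using first subsetD[OF sub u] by (simp add: mem_lattice_diag)
  qed
  ultimately show ?thesis
    by blast
next
  case False
  have "lattice_of C \<subseteq> scale_set \<pi> std_lattice"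
  proof
    fix u assume u: "u \<in> lattice_of C"
    obtain a b where "u = (a, b)"
      by fastforce
    with u False first show "u \<in> scale_set \<pi> std_lattice"
      by (simp add: mem_scaled_std_lattice)
  qed
  then show ?thesis
    using piL by blast
qed

text \<open>The lattices strictly between \<open>\<pi> L\<^sub>0\<close> and \<open>L\<^sub>0\<close> are the lines of the plane over
  \<open>\<int>/p\<close>: the line through \<open>(1, t)\<close> gives \<open>lattice_of (1, 0, t, \<pi>)\<close>, the line through
  \<open>(0, 1)\<close> gives \<open>lattice_of (\<pi>, 0, 0, 1)\<close>.\<close>

lemma lattice_between_cases:
  assumes "scale_set \<pi> std_lattice \<subseteq> lattice_of C" "lattice_of C \<subseteq> std_lattice"
  shows "lattice_of C = std_lattice \<or> lattice_of C = scale_set \<pi> std_lattice \<or>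
    lattice_of C = lattice_of (\<pi>, 0, 0, 1) \<or> (\<exists>t. val_ge 0 t \<and> lattice_of C = lattice_of (1, 0, t, \<pi>))"
  using lattice_between_unit_first[OF assms] lattice_between_nonunit_first[OF assms] by blast

definition diag_unif :: "nat \<Rightarrow> 'k mat2" where
  "diag_unif i = (\<pi> ^ i, 0, 0, 1)"

definition std_vertex :: "nat \<Rightarrow> ('k \<times> 'k) set set" where
  "std_vertex i = hclass (lattice_of (diag_unif i))"

lemma mat_det_diag_unif [simp]: "mat_det (diag_unif i) = \<pi> ^ i"
  by (simp add: diag_unif_def)

lemma vertex_act_std_vertex:
  "vertex_act (mat_apply g) (std_vertex i) = hclass (lattice_of (mat_mult g (diag_unif i)))"
  unfolding std_vertex_def vertex_act_hclass image_mat_apply_mult ..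

lemma vertex_act_std_vertex_eq:
  "hclass (lattice_of (mat_mult g (diag_unif i))) = hclass (lattice_of (diag_unif j)) \<Longrightarrow>
    vertex_act (mat_apply g) (std_vertex i) = std_vertex j"
  by (simp only: vertex_act_std_vertex) (simp add: std_vertex_def)

lemma adjacent_normal_form:
  assumes B: "mat_det B \<noteq> 0" and Y: "is_vertex v Y" and adj: "adjacent p (hclass (lattice_of B)) Y"
  shows "\<exists>C. scale_set \<pi> std_lattice \<subseteq> lattice_of C \<and> lattice_of C \<subseteq> std_lattice \<and>
    Y = hclass (mat_apply B ` lattice_of C)"
proof -
  obtain L L' where LL: "L \<in> hclass (lattice_of B)" "L' \<in> Y" "scale_set \<pi> L \<subseteq> L'" "L' \<subseteq> L"
    using adj unfolding adjacent_def by blast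
  obtain c where c: "c \<noteq> 0" "L = scale_set c (lattice_of B)"
    using LL(1) unfolding hclass_def by blast
  define B' where "B' = mat_mult (mat_scalar c) B"
  have L: "L = lattice_of B'"
    unfolding c B'_def scale_set_eq_image image_mat_apply_mult ..
  have B': "mat_det B' \<noteq> 0"
    using c B by (simp add: B'_def mat_det_mult)
  obtain B1 where B1: "Y = hclass (lattice_of B1)"
    using Y is_vertex_iff by blast
  obtain c' where c': "L' = scale_set c' (lattice_of B1)"
    using LL(2) B1 unfolding hclass_def by blast
  define C where "C = mat_mult (mat_inv B') (mat_mult (mat_scalar c') B1)"
  have L'C: "lattice_of C = mat_apply (mat_inv B') ` L'"
    unfolding C_def c' scale_set_eq_image image_mat_apply_mult ..
  have "mat_apply (mat_inv B') ` L = std_lattice"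
    unfolding L image_mat_apply_mult using mat_mult_inv_left[OF B'] by simp
  then have "lattice_of C \<subseteq> std_lattice"
    unfolding L'C using image_mono[OF LL(4)] by metis
  moreover have "mat_mult (mat_inv B') (mat_mult (mat_scalar \<pi>) B') = mat_scalar \<pi>"
    by (simp add: mat_mult_scalar_commute mat_mult_inv_left[OF B'] flip: mat_mult_assoc)
  then have "mat_apply (mat_inv B') ` scale_set \<pi> L = scale_set \<pi> std_lattice"
    unfolding L scale_set_eq_image image_mat_apply_mult by simp
  then have "scale_set \<pi> std_lattice \<subseteq> lattice_of C"
    unfolding L'C using LL(3) by (metis image_mono)
  moreover have "Y = hclass (mat_apply B ` lattice_of C)"
  proof -
    have "mat_apply B' ` lattice_of C = L'"
      unfolding L'C image_mat_apply_mult using mat_mult_inv_right[OF B'] by simp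
    then have "L' = lattice_of (mat_mult (mat_scalar c) (mat_mult B C))"
      by (simp add: B'_def image_mat_apply_mult mat_mult_assoc)
    moreover have "Y = hclass L'"
      using hclass_eq_if_mem LL(2) B1 by blast
    ultimately show ?thesis
      by (simp add: hclass_mat_scalar[OF c(1)] image_mat_apply_mult)
  qed
  ultimately show ?thesis
    by blast
qed

lemma neighbour_of_std_vertex:
  assumes "is_vertex v Y" "adjacent p (std_vertex m) Y" "Y \<noteq> std_vertex m"
  shows "Y = std_vertex (Suc m) \<or>
    (\<exists>t. val_ge 0 t \<and> Y = hclass (lattice_of (mat_mult (diag_unif m) (1, 0, t, \<pi>))))"
proof -
  obtain C where C: "scale_set \<pi> std_lattice \<subseteq> lattice_of C" "lattice_of C \<subseteq> std_lattice"
      and Y: "Y = hclass (mat_apply (diag_unif m) ` lattice_of C)"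
    using adjacent_normal_form[of "diag_unif m", OF _ assms(1)] assms(2) unfolding std_vertex_def by fastforce
  have scaled: "mat_apply (diag_unif m) ` scale_set \<pi> std_lattice = lattice_of (mat_mult (mat_scalar \<pi>) (diag_unif m))"
    unfolding scale_set_eq_image image_mat_apply_mult by (simp add: mat_mult_scalar_commute)
  have next_vertex: "mat_mult (diag_unif m) (\<pi>, 0, 0, 1) = diag_unif (Suc m)"
    by (simp add: diag_unif_def)
  from lattice_between_cases[OF C] show ?thesis
  proof (elim disjE exE conjE)
    assume "lattice_of C = std_lattice"
    then show ?thesis
      using Y assms(3) by (simp add: std_vertex_def)
  next
    assume "lattice_of C = scale_set \<pi> std_lattice"
    then show ?thesis
      using Y assms(3) scaled by (simp add: hclass_mat_scalar std_vertex_def)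
  next
    assume "lattice_of C = lattice_of (\<pi>, 0, 0, 1)"
    then show ?thesis
      using Y next_vertex by (simp add: image_mat_apply_mult std_vertex_def)
  next
    fix t
    assume "val_ge 0 t" "lattice_of C = lattice_of (1, 0, t, \<pi>)"
    then show ?thesis
      using Y by (auto simp: image_mat_apply_mult)
  qed
qed

lemma slope_neighbour_divisible:
  assumes "0 < m" "val_ge 1 t"
  shows "hclass (lattice_of (mat_mult (diag_unif m) (1, 0, t, \<pi>))) = std_vertex (m - 1)"
proof -
  have "mat_mult (diag_unif m) (1, 0, t, \<pi>) = mat_mult (mat_mult (mat_scalar \<pi>) (diag_unif (m - 1))) (1, 0, t / \<pi>, 1)"
    using assms(1) by (cases m) (auto simp: diag_unif_def mat_scalar_def)
  moreover have "mat_integral (1, 0, t / \<pi>, 1)" "mat_integral (1, 0, - (t / \<pi>), 1)"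
      "mat_mult (1, 0, t / \<pi>, 1) (1, 0, - (t / \<pi>), 1) = mat_one"
    using val_ge_1 assms(2) by (auto simp: mat_one_def val_ge_1_iff)
  ultimately have "hclass (lattice_of (mat_mult (diag_unif m) (1, 0, t, \<pi>))) =
      hclass (lattice_of (mat_mult (mat_scalar \<pi>) (diag_unif (m - 1))))"
    by (rule hclass_unimodular)
  then show ?thesis
    by (simp add: hclass_mat_scalar std_vertex_def)
qed

lemma unipotent_fixes_std_vertex:
  assumes "val_ge 0 s" "i \<le> m"
  shows "vertex_act (mat_apply (1, \<pi> ^ m * s, 0, 1)) (std_vertex i) = std_vertex i"
proof (rule vertex_act_std_vertex_eq)
  define u where "u = \<pi> ^ (m - i) * s"
  have "\<pi> ^ m = \<pi> ^ i * \<pi> ^ (m - i)"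
    using assms(2) by (simp flip: power_add)
  then have "mat_mult (1, \<pi> ^ m * s, 0, 1) (diag_unif i) = mat_mult (diag_unif i) (1, u, 0, 1)"
    by (simp add: u_def diag_unif_def)
  moreover have "val_ge 0 u"
    unfolding u_def using val_ge_mono[OF val_ge_mult[OF val_ge_uniformizer_power assms(1)]] by simp
  then have "mat_integral (1, u, 0, 1)" "mat_integral (1, - u, 0, 1)" "mat_mult (1, u, 0, 1) (1, - u, 0, 1) = mat_one"
    using val_ge_1 by (auto simp: mat_one_def)
  ultimately show "hclass (lattice_of (mat_mult (1, \<pi> ^ m * s, 0, 1) (diag_unif i))) = hclass (lattice_of (diag_unif i))"
    by (rule hclass_unimodular)
qed

lemma ex_extend_std_path_slope:
  assumes t: "val_ge 0 t" and Y: "Y = hclass (lattice_of (mat_mult (diag_unif m) (1, 0, t, \<pi>)))"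
    and no_backtrack: "0 < m \<Longrightarrow> Y \<noteq> std_vertex (m - 1)"
  shows "\<exists>h. mat_det h \<noteq> 0 \<and> (\<forall>i\<le>m. vertex_act (mat_apply h) (std_vertex i) = std_vertex i) \<and>
    vertex_act (mat_apply h) (std_vertex (Suc m)) = Y"
proof (cases "m = 0")
  case True
  have U: "mat_integral (0, 1, 1, t)" "mat_integral (- t, 1, 1, 0)" "mat_mult (0, 1, 1, t) (- t, 1, 1, 0) = mat_one"
    using t val_ge_1 by (auto simp: mat_one_def)
  have W: "mat_integral (0, 1, 1, 0)" "mat_mult (0, 1, 1, 0) (0, 1, 1, 0) = mat_one"
    using val_ge_1 by (auto simp: mat_one_def)
  have "vertex_act (mat_apply (0, 1, 1, t)) (std_vertex 0) = std_vertex 0"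
    by (rule vertex_act_std_vertex_eq, rule hclass_unimodular[OF _ U]) (simp add: diag_unif_def)
  moreover have "vertex_act (mat_apply (0, 1, 1, t)) (std_vertex 1) = Y"
    unfolding vertex_act_std_vertex Y True
    by (rule sym, rule hclass_unimodular[OF _ W(1) W]) (simp add: diag_unif_def)
  ultimately show ?thesis
    using True by (intro exI[of _ "(0, 1, 1, t)"]) auto
next
  case False
  then have unit: "\<not> val_ge 1 t"
    using slope_neighbour_divisible no_backtrack Y by blast
  define s where "s = inverse t"
  have s: "val_ge 0 s" "t * s = 1"
    unfolding s_def using unit_inverse_integral t unit nonzero_if_not_val_ge_1 by auto
  define h :: "'k mat2" where "h = (1, \<pi> ^ m * s, 0, 1)"
  have "mat_mult h (diag_unif (Suc m)) = mat_mult (mat_mult (diag_unif m) (1, 0, t, \<pi>)) (\<pi>, s, - t, 0)"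
    using s(2) by (simp add: h_def diag_unif_def mult.commute)
  moreover have "mat_integral (\<pi>, s, - t, 0)" "mat_integral (0, - s, t, \<pi>)"
      "mat_mult (\<pi>, s, - t, 0) (0, - s, t, \<pi>) = mat_one"
    using s t val_ge_mono[OF val_ge_uniformizer_mult[OF val_ge_1]] by (auto simp: mat_one_def mult.commute)
  ultimately have "vertex_act (mat_apply h) (std_vertex (Suc m)) = Y"
    unfolding vertex_act_std_vertex Y by (rule hclass_unimodular)
  moreover have "mat_det h \<noteq> 0"
    by (simp add: h_def)
  ultimately show ?thesis
    using unipotent_fixes_std_vertex[OF s(1)] unfolding h_def by blast
qed

lemma ex_extend_std_path:
  assumes "is_vertex v Y" "adjacent p (std_vertex m) Y" "Y \<noteq> std_vertex m"
    and "0 < m \<Longrightarrow> Y \<noteq> std_vertex (m - 1)"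
  shows "\<exists>h. mat_det h \<noteq> 0 \<and> (\<forall>i\<le>m. vertex_act (mat_apply h) (std_vertex i) = std_vertex i) \<and>
    vertex_act (mat_apply h) (std_vertex (Suc m)) = Y"
  using neighbour_of_std_vertex[OF assms(1-3)]
proof (elim disjE exE conjE)
  assume "Y = std_vertex (Suc m)"
  then show ?thesis
    by (intro exI[of _ mat_one]) simp
qed (use ex_extend_std_path_slope assms(4) in blast)

definition reduced_path :: "(nat \<Rightarrow> ('k \<times> 'k) set set) \<Rightarrow> nat \<Rightarrow> bool" where
  "reduced_path V m \<longleftrightarrow> (\<forall>i\<le>m. is_vertex v (V i)) \<and>
     (\<forall>i<m. adjacent p (V i) (V (Suc i)) \<and> V i \<noteq> V (Suc i)) \<and>
     (\<forall>i. Suc (Suc i) \<le> m \<longrightarrow> V i \<noteq> V (Suc (Suc i)))"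

lemma reduced_path_extend_std_image:
  assumes g: "mat_det g \<noteq> 0" "\<And>i. i \<le> m \<Longrightarrow> vertex_act (mat_apply g) (std_vertex i) = V i"
    and V: "reduced_path V (Suc m)"
  shows "\<exists>g'. mat_det g' \<noteq> 0 \<and> (\<forall>i\<le>Suc m. vertex_act (mat_apply g') (std_vertex i) = V i)"
proof -
  define Y where "Y = vertex_act (mat_apply (mat_inv g)) (V (Suc m))"
  have gY: "vertex_act (mat_apply g) Y = V (Suc m)"
    unfolding Y_def using vertex_act_inv_right g(1) by blast
  have "vertex_act (mat_apply (mat_inv g)) (V m) = std_vertex m"
    using vertex_act_inv_left[OF g(1), of "std_vertex m"] g(2)[OF le_refl] by simp
  have "is_vertex v Y"
    unfolding Y_def using V g(1) by (intro is_vertex_vertex_act) (auto simp: reduced_path_def mat_det_inv)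
  moreover have "adjacent p (std_vertex m) Y"
    using adjacent_vertex_act[of "V m" "V (Suc m)" "mat_inv g"] V \<open>vertex_act (mat_apply (mat_inv g)) (V m) = std_vertex m\<close>
    unfolding Y_def reduced_path_def by simp
  moreover have "Y \<noteq> std_vertex m"
    using gY g(2)[of m] V unfolding reduced_path_def by auto
  moreover have "Y \<noteq> std_vertex (m - 1)" if "0 < m"
  proof
    assume "Y = std_vertex (m - 1)"
    then have "V (m - 1) = V (Suc (Suc (m - 1)))"
      using gY g(2)[of "m - 1"] that by simp
    moreover have "Suc (Suc (m - 1)) \<le> Suc m"
      using that by simp
    ultimately show False
      using V unfolding reduced_path_def by blast
  qed
  ultimately obtain h where h: "mat_det h \<noteq> 0" "\<forall>i\<le>m. vertex_act (mat_apply h) (std_vertex i) = std_vertex i"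
      "vertex_act (mat_apply h) (std_vertex (Suc m)) = Y"
    using ex_extend_std_path by blast
  have "vertex_act (mat_apply (mat_mult g h)) (std_vertex i) = V i" if "i \<le> Suc m" for i
    using that g(2) h gY by (cases "i = Suc m") (auto simp: vertex_act_mult)
  moreover have "mat_det (mat_mult g h) \<noteq> 0"
    using g(1) h(1) by (simp add: mat_det_mult)
  ultimately show ?thesis
    by blast
qed

lemma reduced_path_std_vertex:
  "reduced_path V m \<Longrightarrow> \<exists>g. mat_det g \<noteq> 0 \<and> (\<forall>i\<le>m. vertex_act (mat_apply g) (std_vertex i) = V i)"
proof (induction m)
  case 0
  then obtain B where "mat_det B \<noteq> 0" "V 0 = hclass (lattice_of B)"
    unfolding reduced_path_def is_vertex_iff by auto
  moreover have "diag_unif 0 = mat_one"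
    by (simp add: diag_unif_def mat_one_def)
  ultimately show ?case
    by (intro exI[of _ B]) (simp add: vertex_act_std_vertex)
next
  case (Suc m)
  then obtain g where "mat_det g \<noteq> 0" "\<And>i. i \<le> m \<Longrightarrow> vertex_act (mat_apply g) (std_vertex i) = V i"
    unfolding reduced_path_def by fastforce
  then show ?case
    using reduced_path_extend_std_image Suc.prems by blast
qed

lemma v_det_le_if_lattice_subset:
  assumes "lattice_of A \<subseteq> lattice_of B" "mat_det A \<noteq> 0"
  shows "v (mat_det B) \<le> v (mat_det A)"
proof -
  obtain U where U: "mat_integral U" "A = mat_mult B U"
    using lattice_subset_imp_integral_factor assms(1) by blast
  then have "mat_det A = mat_det B * mat_det U" "mat_det U \<noteq> 0" "mat_det B \<noteq> 0"
    using assms(2) by (auto simp: mat_det_mult)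
  moreover have "val_ge 0 (mat_det U)"
    using U(1) by (cases U) (auto intro!: val_ge_diff val_ge_mult_integral)
  ultimately show ?thesis
    by (simp add: v_mult val_ge_def)
qed

lemma vertex_type_hclass:
  assumes "mat_det B \<noteq> 0"
  shows "vertex_type v (hclass (lattice_of B)) t \<longleftrightarrow> t = v (mat_det B) mod 2"
proof
  assume "vertex_type v (hclass (lattice_of B)) t"
  then obtain e f where ef: "fst e * snd f - snd e * fst f \<noteq> 0"
      "lattice_span v e f \<in> hclass (lattice_of B)" "t = v (fst e * snd f - snd e * fst f) mod 2"
    unfolding vertex_type_def by blast
  define E where "E = (fst e, fst f, snd e, snd f)"
  have dE: "mat_det E = fst e * snd f - snd e * fst f"
    by (simp add: E_def algebra_simps)
  obtain c where c: "c \<noteq> 0" "lattice_of E = lattice_of (mat_mult (mat_scalar c) B)"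
    using ef(2) unfolding lattice_span_eq E_def[symmetric] hclass_def scale_set_eq_image image_mat_apply_mult
    by blast
  have "v (mat_det E) = v (mat_det (mat_mult (mat_scalar c) B))"
    using v_det_le_if_lattice_subset[of E "mat_mult (mat_scalar c) B"]
      v_det_le_if_lattice_subset[of "mat_mult (mat_scalar c) B" E] ef(1) dE c assms
    by (simp add: mat_det_mult)
  also have "\<dots> = 2 * v c + v (mat_det B)"
    using c assms by (simp add: mat_det_mult v_mult)
  finally show "t = v (mat_det B) mod 2"
    using ef(3) dE by simp
next
  assume t: "t = v (mat_det B) mod 2"
  obtain a b c d where B: "B = (a, b, c, d)"
    by (metis prod_cases4)
  have "lattice_span v (a, c) (b, d) = lattice_of B"
    unfolding lattice_span_eq B by simp
  then show "vertex_type v (hclass (lattice_of B)) t"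
    unfolding vertex_type_def using assms t B hclass_self
    by (intro exI[of _ "(a, c)"] exI[of _ "(b, d)"]) (auto simp: mult.commute)
qed

lemma vertex_type_vertex_act_std_vertex:
  assumes "mat_det g \<noteq> 0"
  shows "vertex_type v (vertex_act (mat_apply g) (std_vertex i)) t \<longleftrightarrow> t = (v (mat_det g) + int i) mod 2"
  using assms by (simp add: vertex_act_std_vertex vertex_type_hclass mat_det_mult v_mult add.commute)

section \<open>Minimal galleries\<close>

definition minimal_gallery :: "('k \<times> 'k) set set set list \<Rightarrow> bool" where
  "minimal_gallery cs \<longleftrightarrow> gallery p v cs \<and>
     (\<forall>cs'. gallery p v cs' \<and> hd cs' = hd cs \<and> last cs' = last cs \<longrightarrow> length cs \<le> length cs')"

lemma gallery_splice:
  assumes g: "gallery p v cs" and ab: "a \<le> b" "b < length cs"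
    and link: "0 < a \<Longrightarrow> cs ! (a - 1) \<noteq> cs ! b \<and> cs ! (a - 1) \<inter> cs ! b \<noteq> {}"
  shows "gallery p v (take a cs @ drop b cs)"
proof -
  let ?c = "take a cs @ drop b cs"
  have len: "length ?c = a + (length cs - b)"
    using ab by simp
  have nth1: "?c ! i = cs ! i" if "i < a" for i
    using that ab by (simp add: nth_append)
  have nth2: "?c ! i = cs ! (i - a + b)" if "a \<le> i" "i < length ?c" for i
    using that ab by (simp add: nth_append add.commute)
  have "?c ! i \<noteq> ?c ! Suc i \<and> ?c ! i \<inter> ?c ! Suc i \<noteq> {}" if "Suc i < length ?c" for i
  proof -
    consider "Suc i < a" | "Suc i = a" | "a \<le> i"
      by linarith
    then show ?thesis
    proof cases
      case 1
      then show ?thesis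
        using g nth1 ab unfolding gallery_def by simp
    next
      case 2
      then have "i = a - 1" "0 < a"
        by auto
      then show ?thesis
        using link nth1[of i] nth2[of "Suc i"] that 2 by simp
    next
      case 3
      then have "Suc (i - a + b) < length cs" "Suc i - a + b = Suc (i - a + b)"
        using that len by linarith+
      then show ?thesis
        using g nth2[of i] nth2[of "Suc i"] that 3 unfolding gallery_def by simp
    qed
  qed
  moreover have "?c \<noteq> []" "\<forall>C\<in>set ?c. is_chamber p v C"
    using g ab unfolding gallery_def by (auto dest: in_set_dropD in_set_takeD)
  ultimately show ?thesis
    unfolding gallery_def by blast
qed

text \<open>Otherwise the gallery could be shortened by cutting out the chambers strictly between
  positions \<open>j\<close> and \<open>l\<close> (or also the chamber \<open>j\<close> itself, when the two coincide).\<close>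

lemma minimal_gallery_no_shortcut:
  assumes min: "minimal_gallery cs" and jl: "Suc j < l" "l < length cs"
  shows "cs ! j \<noteq> cs ! l \<and> cs ! j \<inter> cs ! l = {}"
proof (rule ccontr)
  assume short: "\<not> (cs ! j \<noteq> cs ! l \<and> cs ! j \<inter> cs ! l = {})"
  have g: "gallery p v cs"
    using min unfolding minimal_gallery_def by blast
  define a where "a = (if cs ! j = cs ! l then j else Suc j)"
  have "a \<le> l" "a < l"
    using jl by (auto simp: a_def)
  have "gallery p v (take a cs @ drop l cs)"
  proof (rule gallery_splice[OF g \<open>a \<le> l\<close> jl(2)])
    assume "0 < a"
    show "cs ! (a - 1) \<noteq> cs ! l \<and> cs ! (a - 1) \<inter> cs ! l \<noteq> {}"
    proof (cases "cs ! j = cs ! l")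
      case True
      then have "Suc (a - 1) = j" "Suc (a - 1) < length cs"
        using \<open>0 < a\<close> jl by (auto simp: a_def)
      then show ?thesis
        using g True unfolding gallery_def by metis
    next
      case False
      then show ?thesis
        using short by (simp add: a_def)
    qed
  qed
  moreover have "hd (take a cs @ drop l cs) = hd cs"
  proof (cases "a = 0")
    case True
    then have "cs ! 0 = cs ! l" "cs \<noteq> []"
      using jl by (auto simp: a_def split: if_splits)
    then show ?thesis
      using True jl by (simp add: hd_drop_conv_nth hd_conv_nth)
  next
    case False
    then show ?thesis
      using jl by (cases cs) auto
  qed
  moreover have "last (take a cs @ drop l cs) = last cs" "length (take a cs @ drop l cs) < length cs"
    using jl \<open>a < l\<close> by auto
  ultimately show False
    using min unfolding minimal_gallery_def by fastforce
qed

lemma chamber_eq_pair: "is_chamber p v C \<Longrightarrow> x \<in> C \<Longrightarrow> y \<in> C \<Longrightarrow> x \<noteq> y \<Longrightarrow> C = {x, y}"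
  unfolding is_chamber_def by auto

lemma ex_other_vertex: "is_chamber p v C \<Longrightarrow> x \<in> C \<Longrightarrow> \<exists>y. y \<in> C \<and> y \<noteq> x"
  unfolding is_chamber_def by auto

lemma is_vertex_if_mem_chamber: "is_chamber p v C \<Longrightarrow> x \<in> C \<Longrightarrow> is_vertex v x"
  unfolding is_chamber_def by auto

lemma adjacent_if_chamber_eq: "is_chamber p v C \<Longrightarrow> C = {x, y} \<Longrightarrow> adjacent p x y"
  unfolding is_chamber_def by (auto simp: doubleton_eq_iff intro: adjacent_sym)

lemma reduced_path_of_chambers:
  assumes ch: "\<And>i. i \<le> n \<Longrightarrow> is_chamber p v (cs ! i) \<and> cs ! i = {V i, V (Suc i)} \<and> V i \<noteq> V (Suc i)"
    and distinct: "\<And>i. i < n \<Longrightarrow> cs ! i \<noteq> cs ! Suc i"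
  shows "reduced_path V (Suc n)"
  unfolding reduced_path_def
proof (intro conjI allI impI)
  fix i assume "i \<le> Suc n"
  then show "is_vertex v (V i)"
    using ch[of i] ch[of n] is_vertex_if_mem_chamber by (cases "i \<le> n") (auto simp: le_Suc_eq)
next
  fix i assume "i < Suc n"
  then show "adjacent p (V i) (V (Suc i))" "V i \<noteq> V (Suc i)"
    using ch[of i] adjacent_if_chamber_eq by auto
next
  fix i assume i: "Suc (Suc i) \<le> Suc n"
  show "V i \<noteq> V (Suc (Suc i))"
  proof
    assume "V i = V (Suc (Suc i))"
    then have "cs ! i = cs ! Suc i"
      using ch[of i] ch[of "Suc i"] i by (auto simp: insert_commute)
    then show False
      using distinct[of i] i by simp
  qed
qed

lemma minimal_gallery_panels:
  assumes min: "minimal_gallery cs" and len: "length cs = Suc n"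
  obtains P where "\<And>i. i < n \<Longrightarrow> P i \<in> cs ! i \<inter> cs ! Suc i" "\<And>i. Suc i < n \<Longrightarrow> P i \<noteq> P (Suc i)"
proof -
  define P where "P i = (SOME x. x \<in> cs ! i \<inter> cs ! Suc i)" for i
  have "cs ! i \<inter> cs ! Suc i \<noteq> {}" if "i < n" for i
    using min len that unfolding minimal_gallery_def gallery_def by simp
  then have P: "P i \<in> cs ! i \<inter> cs ! Suc i" if "i < n" for i
    unfolding P_def using that by (metis ex_in_conv someI_ex)
  moreover have "P i \<noteq> P (Suc i)" if "Suc i < n" for i
    using P[of i] P[of "Suc i"] minimal_gallery_no_shortcut[OF min, of i "Suc (Suc i)"] that len by auto
  ultimately show ?thesis
    using that by blast
qed

lemma minimal_gallery_vertices:
  assumes min: "minimal_gallery cs" and len: "length cs = Suc n"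
  shows "\<exists>V. \<forall>i\<le>n. cs ! i = {V i, V (Suc i)} \<and> V i \<noteq> V (Suc i)"
proof -
  have ch: "is_chamber p v (cs ! i)" if "i \<le> n" for i
    using min len that unfolding minimal_gallery_def gallery_def by (metis le_imp_less_Suc nth_mem)
  show ?thesis
  proof (cases "n = 0")
    case True
    obtain X Y where "cs ! 0 = {X, Y}" "X \<noteq> Y"
      using ch[of 0] unfolding is_chamber_def by auto
    then show ?thesis
      using True by (intro exI[of _ "\<lambda>i. if i = 0 then X else Y"]) auto
  next
    case False
    obtain P where P: "\<And>i. i < n \<Longrightarrow> P i \<in> cs ! i \<inter> cs ! Suc i" "\<And>i. Suc i < n \<Longrightarrow> P i \<noteq> P (Suc i)"
      using minimal_gallery_panels[OF min len] by blast
    obtain V0 where V0: "V0 \<in> cs ! 0" "V0 \<noteq> P 0"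
      using ex_other_vertex[OF ch, of 0 "P 0"] P(1)[of 0] False by blast
    obtain VL where VL: "VL \<in> cs ! n" "VL \<noteq> P (n - 1)"
      using ex_other_vertex[OF ch, of n "P (n - 1)"] P(1)[of "n - 1"] False by auto
    define V where "V i = (if i = 0 then V0 else if i \<le> n then P (i - 1) else VL)" for i
    have "cs ! i = {V i, V (Suc i)} \<and> V i \<noteq> V (Suc i)" if i: "i \<le> n" for i
    proof -
      consider "i = 0" | "0 < i" "i < n" | "i = n"
        using i by fastforce
      then show ?thesis
      proof cases
        case 1
        then show ?thesis
          using V0 P(1)[of 0] False chamber_eq_pair[OF ch[of 0]] unfolding V_def by auto
      next
        case 2
        then have "V i = P (i - 1)" "V (Suc i) = P i" "P (i - 1) \<noteq> P i" "P (i - 1) \<in> cs ! i"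
          using P(2)[of "i - 1"] P(1)[of "i - 1"] unfolding V_def by auto
        then show ?thesis
          using P(1)[of i] 2 chamber_eq_pair[OF ch[of i]] by auto
      next
        case 3
        then have "V i = P (n - 1)" "V (Suc i) = VL" "P (n - 1) \<in> cs ! n"
          using False P(1)[of "n - 1"] unfolding V_def by auto
        then show ?thesis
          using VL 3 chamber_eq_pair[OF ch[of n]] by auto
      qed
    qed
    then show ?thesis
      by blast
  qed
qed

lemma minimal_gallery_reduced_path:
  assumes min: "minimal_gallery cs" and len: "length cs = Suc n"
  shows "\<exists>V. reduced_path V (Suc n) \<and> (\<forall>i\<le>n. cs ! i = {V i, V (Suc i)})"
proof -
  obtain V where V: "\<And>i. i \<le> n \<Longrightarrow> cs ! i = {V i, V (Suc i)} \<and> V i \<noteq> V (Suc i)"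
    using minimal_gallery_vertices[OF min len] by blast
  have g: "gallery p v cs"
    using min unfolding minimal_gallery_def by blast
  have "reduced_path V (Suc n)"
  proof (rule reduced_path_of_chambers)
    fix i assume "i \<le> n"
    then show "is_chamber p v (cs ! i) \<and> cs ! i = {V i, V (Suc i)} \<and> V i \<noteq> V (Suc i)"
      using V g len unfolding gallery_def by (metis le_imp_less_Suc nth_mem)
  next
    fix i assume "i < n"
    then show "cs ! i \<noteq> cs ! Suc i"
      using g len unfolding gallery_def by simp
  qed
  then show ?thesis
    using V by blast
qed

lemma weyl_dist_reduced_path:
  assumes "weyl_dist p v C C' w"
  shows "\<exists>V. reduced_path V (Suc (length w)) \<and> C = {V 0, V 1} \<and>
    C' = {V (length w), V (Suc (length w))} \<and> (w \<noteq> [] \<longrightarrow> vertex_type v (V 1) (w ! 0))"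
proof -
  obtain cs where cs: "minimal_gallery cs" "hd cs = C" "last cs = C'" "length cs = Suc (length w)"
      "\<forall>i < length w. \<exists>X. X \<in> cs ! i \<inter> cs ! Suc i \<and> vertex_type v X (w ! i)"
    using assms unfolding weyl_dist_def minimal_gallery_def by auto
  obtain V where rp: "reduced_path V (Suc (length w))"
      and V: "\<And>i. i \<le> length w \<Longrightarrow> cs ! i = {V i, V (Suc i)}"
    using minimal_gallery_reduced_path[OF cs(1,4)] by blast
  have "cs \<noteq> []"
    using cs(4) by auto
  then have "C = {V 0, V 1}" "C' = {V (length w), V (Suc (length w))}"
    using cs(2-4) V[of 0] V[of "length w"] by (simp_all add: hd_conv_nth last_conv_nth)
  moreover have "vertex_type v (V 1) (w ! 0)" if w: "w \<noteq> []"
  proof -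
    obtain X where X: "X \<in> cs ! 0 \<inter> cs ! 1" "vertex_type v X (w ! 0)"
      using cs(5) w by auto
    have "1 \<le> length w"
      using w by (cases w) auto
    then have "V 0 \<noteq> V (Suc (Suc 0))" "cs ! 0 = {V 0, V 1}" "cs ! 1 = {V 1, V (Suc (Suc 0))}"
      using rp V[of 0] V[of 1] unfolding reduced_path_def by simp_all
    then have "X = V 1"
      using X(1) by auto
    then show ?thesis
      using X(2) by simp
  qed
  ultimately show ?thesis
    using rp by blast
qed

section \<open>Weyl transitivity of the special linear group\<close>

lemma diag_unit_fixes_std_vertex:
  assumes "l \<noteq> 0" "c \<noteq> 0" "v c = 0"
  shows "vertex_act (mat_apply (l, 0, 0, l * c)) (std_vertex i) = std_vertex i"
proof (rule vertex_act_std_vertex_eq)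
  have "mat_integral (1, 0, 0, c)" "mat_integral (1, 0, 0, 1 / c)" "mat_mult (1, 0, 0, c) (1, 0, 0, 1 / c) = mat_one"
    using assms(2,3) val_ge_1 by (auto simp: val_ge_def v_divide mat_one_def)
  then have "hclass (lattice_of (mat_mult (diag_unif i) (1, 0, 0, c))) = hclass (lattice_of (diag_unif i))"
    by (rule hclass_unimodular[OF refl])
  moreover have "mat_mult (l, 0, 0, l * c) (diag_unif i) = mat_mult (mat_scalar l) (mat_mult (diag_unif i) (1, 0, 0, c))"
    by (simp add: diag_unif_def mat_scalar_def)
  ultimately show "hclass (lattice_of (mat_mult (l, 0, 0, l * c) (diag_unif i))) = hclass (lattice_of (diag_unif i))"
    using hclass_mat_scalar[OF assms(1)] by simp
qed

text \<open>Two elements of \<open>GL\<^sub>2\<close> moving the standard vertices to given ones differ, up to an element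
  of \<open>SL\<^sub>2\<close>, by a diagonal matrix \<open>diag(l, l c)\<close> with \<open>c\<close> a unit, which fixes every standard
  vertex; such an \<open>l\<close> exists exactly when the valuations of the determinants have equal parity.\<close>

lemma ex_sl2_move_path:
  assumes g: "mat_det g \<noteq> 0" and g': "mat_det g' \<noteq> 0"
    and parity: "v (mat_det g) mod 2 = v (mat_det g') mod 2"
  shows "\<exists>h. mat_det h = 1 \<and>
    (\<forall>i. vertex_act (mat_apply h) (vertex_act (mat_apply g) (std_vertex i)) = vertex_act (mat_apply g') (std_vertex i))"
proof -
  define d where "d = mat_det g / mat_det g'"
  have "d \<noteq> 0" "v d = v (mat_det g) - v (mat_det g')"
    using g g' by (simp_all add: d_def v_divide)
  then obtain j where j: "v d = 2 * j"
    using parity by (metis dvd_def mod_eq_dvd_iff)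
  obtain l where l: "l \<noteq> 0" "v l = j"
    using ex_nonzero_val by blast
  define c where "c = d / (l * l)"
  have c: "c \<noteq> 0" "v c = 0"
    using \<open>d \<noteq> 0\<close> l j by (simp_all add: c_def v_divide v_mult)
  define h where "h = mat_mult g' (mat_mult (l, 0, 0, l * c) (mat_inv g))"
  have "mat_det h = mat_det g' * (l * (l * c)) * (1 / mat_det g)"
    unfolding h_def using g by (simp add: mat_det_mult mat_det_inv)
  also have "\<dots> = 1"
    using g g' l by (simp add: c_def d_def)
  finally have "mat_det h = 1" .
  moreover have "vertex_act (mat_apply h) (vertex_act (mat_apply g) (std_vertex i)) = vertex_act (mat_apply g') (std_vertex i)" for i
    unfolding h_def vertex_act_mult
    using vertex_act_inv_left[OF g] diag_unit_fixes_std_vertex[OF l(1) c] by simp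
  ultimately show ?thesis
    by blast
qed

lemma swap_std_vertex_0_1:
  "vertex_act (mat_apply (0, \<pi>, 1, 0)) (std_vertex 0) = std_vertex 1"
  "vertex_act (mat_apply (0, \<pi>, 1, 0)) (std_vertex 1) = std_vertex 0"
proof -
  have U: "mat_integral (0, 1, 1, 0)" "mat_mult (0, 1, 1, 0) (0, 1, 1, 0) = mat_one"
    using val_ge_1 by (auto simp: mat_one_def)
  show "vertex_act (mat_apply (0, \<pi>, 1, 0)) (std_vertex 0) = std_vertex 1"
    by (rule vertex_act_std_vertex_eq, rule hclass_unimodular[OF _ U(1) U]) (simp add: diag_unif_def)
  have "hclass (lattice_of (mat_mult (0, \<pi>, 1, 0) (diag_unif 1))) =
      hclass (lattice_of (mat_mult (mat_scalar \<pi>) (mat_mult (diag_unif 0) (0, 1, 1, 0))))"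
    by (simp add: diag_unif_def mat_scalar_def)
  also have "\<dots> = hclass (lattice_of (diag_unif 0))"
    unfolding hclass_mat_scalar[OF uniformizer_nonzero] by (rule hclass_unimodular[OF refl U(1) U])
  finally show "vertex_act (mat_apply (0, \<pi>, 1, 0)) (std_vertex 1) = std_vertex 0"
    by (rule vertex_act_std_vertex_eq)
qed

lemma ex_sl2_swap_first_chamber:
  assumes g: "mat_det g \<noteq> 0" and g': "mat_det g' \<noteq> 0"
    and parity: "v (mat_det g) mod 2 \<noteq> v (mat_det g') mod 2"
  shows "\<exists>h. mat_det h = 1 \<and>
    vertex_act (mat_apply h) (vertex_act (mat_apply g) (std_vertex 0)) = vertex_act (mat_apply g') (std_vertex 1) \<and>
    vertex_act (mat_apply h) (vertex_act (mat_apply g) (std_vertex 1)) = vertex_act (mat_apply g') (std_vertex 0)"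
proof -
  define g'' where "g'' = mat_mult g' (0, \<pi>, 1, 0)"
  have g'': "mat_det g'' \<noteq> 0" "v (mat_det g'') = v (mat_det g') + 1"
    using g' by (simp_all add: g''_def mat_det_mult v_mult)
  then have "v (mat_det g) mod 2 = v (mat_det g'') mod 2"
    using parity by presburger
  then obtain h where h: "mat_det h = 1"
      "\<And>i. vertex_act (mat_apply h) (vertex_act (mat_apply g) (std_vertex i)) = vertex_act (mat_apply g'') (std_vertex i)"
    using ex_sl2_move_path[OF g g''(1)] by blast
  moreover have "vertex_act (mat_apply g'') (std_vertex 0) = vertex_act (mat_apply g') (std_vertex 1)"
      "vertex_act (mat_apply g'') (std_vertex 1) = vertex_act (mat_apply g') (std_vertex 0)"
    using swap_std_vertex_0_1 by (simp_all add: g''_def vertex_act_mult)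
  ultimately show ?thesis
    by metis
qed

lemma sl2_weyl_transitive:
  assumes w1: "weyl_dist p v C1 C1' w" and w2: "weyl_dist p v C2 C2' w"
  shows "\<exists>h. mat_det h = 1 \<and> chamber_act (mat_apply h) C1 = C2 \<and> chamber_act (mat_apply h) C1' = C2'"
proof -
  obtain V where V: "reduced_path V (Suc (length w))" "C1 = {V 0, V 1}"
      "C1' = {V (length w), V (Suc (length w))}" "w \<noteq> [] \<longrightarrow> vertex_type v (V 1) (w ! 0)"
    using weyl_dist_reduced_path[OF w1] by blast
  obtain U where U: "reduced_path U (Suc (length w))" "C2 = {U 0, U 1}"
      "C2' = {U (length w), U (Suc (length w))}" "w \<noteq> [] \<longrightarrow> vertex_type v (U 1) (w ! 0)"
    using weyl_dist_reduced_path[OF w2] by blast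
  obtain gV where gV: "mat_det gV \<noteq> 0" "\<forall>i\<le>Suc (length w). vertex_act (mat_apply gV) (std_vertex i) = V i"
    using reduced_path_std_vertex[OF V(1)] by blast
  obtain gU where gU: "mat_det gU \<noteq> 0" "\<forall>i\<le>Suc (length w). vertex_act (mat_apply gU) (std_vertex i) = U i"
    using reduced_path_std_vertex[OF U(1)] by blast
  show ?thesis
  proof (cases "v (mat_det gV) mod 2 = v (mat_det gU) mod 2")
    case True
    then obtain h where h: "mat_det h = 1"
        "\<And>i. vertex_act (mat_apply h) (vertex_act (mat_apply gV) (std_vertex i)) = vertex_act (mat_apply gU) (std_vertex i)"
      using ex_sl2_move_path[OF gV(1) gU(1)] by blast
    then have "vertex_act (mat_apply h) (V i) = U i" if "i \<le> Suc (length w)" for i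
      using gV(2) gU(2) that by metis
    then show ?thesis
      using h(1) V(2,3) U(2,3) by (intro exI[of _ h]) (simp add: chamber_act_pair)
  next
    case False
    text \<open>The type of the first panel of a minimal gallery fixes the parity, so a wrong parity
      forces a gallery of a single chamber, which the swap reverses.\<close>
    have "w = []"
    proof (rule ccontr)
      assume "w \<noteq> []"
      then have "vertex_type v (vertex_act (mat_apply gV) (std_vertex 1)) (w ! 0)"
          "vertex_type v (vertex_act (mat_apply gU) (std_vertex 1)) (w ! 0)"
        using V(4) U(4) gV(2) gU(2) by auto
      then show False
        using False gV(1) gU(1) by (simp add: vertex_type_vertex_act_std_vertex) presburger
    qed
    obtain h where "mat_det h = 1" "vertex_act (mat_apply h) (V 0) = U 1" "vertex_act (mat_apply h) (V 1) = U 0"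
      using ex_sl2_swap_first_chamber[OF gV(1) gU(1) False] gV(2) gU(2) by force
    then show ?thesis
      using V(2,3) U(2,3) \<open>w = []\<close> by (intro exI[of _ h]) (auto simp: chamber_act_pair)
  qed
qed

section \<open>Open stabilisers\<close>

definition near_one :: "int \<Rightarrow> 'k mat2 \<Rightarrow> bool" where
  "near_one N E \<longleftrightarrow> entries_val_ge N (E - mat_one)"

lemma entries_val_ge_mult:
  "entries_val_ge K A \<Longrightarrow> entries_val_ge L B \<Longrightarrow> entries_val_ge (K + L) (mat_mult A B)"
  by (cases A; cases B) (auto intro!: val_ge_add val_ge_mult)

lemma entries_val_ge_mono: "entries_val_ge K A \<Longrightarrow> L \<le> K \<Longrightarrow> entries_val_ge L A"
  by (cases A) (auto intro: val_ge_mono)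

lemma ex_entries_val_ge_le: "\<exists>K\<le>M. entries_val_ge K A"
proof -
  obtain a b c d where A: "A = (a, b, c, d)"
    by (metis prod_cases4)
  obtain K1 K2 K3 K4 where "K1 \<le> M" "val_ge K1 a" "K2 \<le> M" "val_ge K2 b" "K3 \<le> M" "val_ge K3 c"
      "K4 \<le> M" "val_ge K4 d"
    using ex_val_ge_le by metis
  then show ?thesis
    unfolding A by (intro exI[of _ "min (min K1 K2) (min K3 K4)"]) (auto intro: val_ge_mono)
qed

lemma near_one_mono: "near_one N E \<Longrightarrow> M \<le> N \<Longrightarrow> near_one M E"
  unfolding near_one_def by (rule entries_val_ge_mono)

lemma conj_near_one_integral:
  assumes B: "entries_val_ge K B" and B': "entries_val_ge K' B'" and inv: "mat_mult B' B = mat_one"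
    and E: "near_one (- K - K') E"
  shows "mat_integral (mat_mult B' (mat_mult E B))"
proof -
  have "mat_mult B' (mat_mult (mat_one + (E - mat_one)) B) = mat_one + mat_mult B' (mat_mult (E - mat_one) B)"
    by (simp only: mat_mult_add_left mat_mult_add_right mat_mult_one inv)
  then have "mat_mult B' (mat_mult E B) = mat_one + mat_mult B' (mat_mult (E - mat_one) B)"
    by simp
  moreover have "entries_val_ge (K' + (- K - K' + K)) (mat_mult B' (mat_mult (E - mat_one) B))"
    using B B' E unfolding near_one_def by (intro entries_val_ge_mult)
  ultimately show ?thesis
    by (cases "mat_mult B' (mat_mult (E - mat_one) B)") (auto simp: mat_one_def intro: val_ge_add val_ge_1)
qed

text \<open>Conjugation by a basis matrix of a lattice of the class moves \<open>E\<close> and its inverse into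
  \<open>GL\<^sub>2(\<int>\<^sub>p)\<close>.\<close>

lemma stabilizer_vertex_open:
  assumes "is_vertex v X"
  shows "\<exists>N. \<forall>E. mat_det E = 1 \<and> near_one N E \<longrightarrow> vertex_act (mat_apply E) X = X"
proof -
  obtain B where B: "mat_det B \<noteq> 0" "X = hclass (lattice_of B)"
    using assms is_vertex_iff by blast
  obtain K where K: "entries_val_ge K B"
    using ex_entries_val_ge_le by blast
  obtain K' where K': "entries_val_ge K' (mat_inv B)"
    using ex_entries_val_ge_le by blast
  have "vertex_act (mat_apply E) X = X" if E: "mat_det E = 1" "near_one (- K - K') E" for E
  proof -
    obtain e1 e2 e3 e4 where e: "E = (e1, e2, e3, e4)"
      by (metis prod_cases4)
    define E' where "E' = (e4, - e2, - e3, e1)"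
    have EE': "mat_mult E E' = mat_one"
      using E(1) e by (simp add: E'_def mat_one_def algebra_simps)
    have "near_one (- K - K') E'"
      using E(2) e by (simp add: E'_def near_one_def mat_one_def)
    then have U: "mat_integral (mat_mult (mat_inv B) (mat_mult E B))" "mat_integral (mat_mult (mat_inv B) (mat_mult E' B))"
      using conj_near_one_integral[OF K K' mat_mult_inv_left[OF B(1)]] E(2) by blast+
    have cancel: "mat_mult B (mat_mult (mat_inv B) Y) = Y" "mat_mult E (mat_mult E' Y) = Y" for Y
      using mat_mult_inv_right[OF B(1)] EE' by (simp_all flip: mat_mult_assoc)
    have "mat_mult (mat_mult (mat_inv B) (mat_mult E B)) (mat_mult (mat_inv B) (mat_mult E' B)) = mat_one"
      by (simp add: mat_mult_assoc cancel mat_mult_inv_left[OF B(1)])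
    moreover have "mat_mult E B = mat_mult B (mat_mult (mat_inv B) (mat_mult E B))"
      by (simp only: cancel)
    ultimately have "hclass (lattice_of (mat_mult E B)) = hclass (lattice_of B)"
      using U by (intro hclass_unimodular) 
    then show ?thesis
      unfolding B(2) vertex_act_hclass image_mat_apply_mult .
  qed
  then show ?thesis
    by blast
qed


lemma stabilizer_chamber_open:
  assumes "is_chamber p v C"
  shows "\<exists>N. \<forall>E. mat_det E = 1 \<and> near_one N E \<longrightarrow> chamber_act (mat_apply E) C = C"
proof -
  obtain X Y where C: "C = {X, Y}" "is_vertex v X" "is_vertex v Y"
    using assms unfolding is_chamber_def by blast
  obtain NX NY where
    X: "\<forall>E. mat_det E = 1 \<and> near_one NX E \<longrightarrow> vertex_act (mat_apply E) X = X" and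
    Y: "\<forall>E. mat_det E = 1 \<and> near_one NY E \<longrightarrow> vertex_act (mat_apply E) Y = Y"
    using stabilizer_vertex_open C(2,3) by metis
  have "chamber_act (mat_apply E) C = C" if "mat_det E = 1" "near_one (max NX NY) E" for E
  proof -
    have "near_one NX E" "near_one NY E"
      using that(2) near_one_mono by fastforce+
    then have "vertex_act (mat_apply E) X = X" "vertex_act (mat_apply E) Y = Y"
      using X Y that(1) by blast+
    then show ?thesis
      unfolding C(1) chamber_act_pair by simp
  qed
  then show ?thesis
    by blast
qed

end

section \<open>Density of the norm-one group\<close>

type_synonym 'a quad = "'a \<times> 'a \<times> 'a \<times> 'a"

fun quat_re :: "'a quad \<Rightarrow> 'a" where "quat_re (x1, x2, x3, x4) = x1"
fun quat_i :: "'a quad \<Rightarrow> 'a" where "quat_i (x1, x2, x3, x4) = x2"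
fun quat_j :: "'a quad \<Rightarrow> 'a" where "quat_j (x1, x2, x3, x4) = x3"
fun quat_k :: "'a quad \<Rightarrow> 'a" where "quat_k (x1, x2, x3, x4) = x4"

definition quat_norm :: "'a::comm_ring_1 \<Rightarrow> 'a \<Rightarrow> 'a quad \<Rightarrow> 'a" where
  "quat_norm a b x = quat_re x * quat_re x - a * (quat_i x * quat_i x) - b * (quat_j x * quat_j x)
     + a * b * (quat_k x * quat_k x)"

text \<open>\<open>x / x\<^sup>* = x\<^sup>2 / N(x)\<close>, computed in the quaternion algebra \<open>(a, b)\<close>.\<close>

definition quat_div_conj :: "'a::field \<Rightarrow> 'a \<Rightarrow> 'a quad \<Rightarrow> 'a quad" where
  "quat_div_conj a b x =
    ((quat_re x * quat_re x + a * (quat_i x * quat_i x) + b * (quat_j x * quat_j x)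
        - a * b * (quat_k x * quat_k x)) * inverse (quat_norm a b x),
     2 * quat_re x * quat_i x * inverse (quat_norm a b x),
     2 * quat_re x * quat_j x * inverse (quat_norm a b x),
     2 * quat_re x * quat_k x * inverse (quat_norm a b x))"

fun of_rat_quad :: "rat quad \<Rightarrow> 'a::field_char_0 quad" where
  "of_rat_quad (x1, x2, x3, x4) = (of_rat x1, of_rat x2, of_rat x3, of_rat x4)"

lemma qnorm_eq_quat_norm: "qnorm \<alpha> \<beta> x = quat_norm \<alpha> \<beta> x"
  by (cases x) (simp add: quat_norm_def power2_eq_square)

lemma of_rat_quat_norm: "of_rat (quat_norm \<alpha> \<beta> x) = quat_norm (of_rat \<alpha>) (of_rat \<beta>) (of_rat_quad x)"
  by (cases x) (simp add: quat_norm_def of_rat_add of_rat_diff of_rat_mult)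

lemma coords_of_rat_quad [simp]:
  "quat_re (of_rat_quad x) = of_rat (quat_re x)" "quat_i (of_rat_quad x) = of_rat (quat_i x)"
  "quat_j (of_rat_quad x) = of_rat (quat_j x)" "quat_k (of_rat_quad x) = of_rat (quat_k x)"
  by (cases x; simp)+

lemma of_rat_quad_div_conj:
  "of_rat_quad (quat_div_conj \<alpha> \<beta> x) = quat_div_conj (of_rat \<alpha>) (of_rat \<beta>) (of_rat_quad x)"
  by (simp add: quat_div_conj_def of_rat_add of_rat_diff of_rat_mult of_rat_inverse
      flip: of_rat_quat_norm)

lemma quat_norm_div_conj:
  fixes a b :: "'a::field"
  assumes "quat_norm a b x \<noteq> 0"
  shows "quat_norm a b (quat_div_conj a b x) = 1"
proof -
  obtain x1 x2 x3 x4 where x: "x = (x1, x2, x3, x4)"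
    by (metis prod_cases4)
  define n where "n = quat_norm a b x"
  define r where "r = x1 * x1 + a * (x2 * x2) + b * (x3 * x3) - a * b * (x4 * x4)"
  have scale: "quat_norm a b (y1 * c, y2 * c, y3 * c, y4 * c) = c * c * quat_norm a b (y1, y2, y3, y4)"
    for y1 y2 y3 y4 c :: 'a
    by (simp add: quat_norm_def algebra_simps)
  have "quat_div_conj a b x =
      (r * inverse n, (2 * x1 * x2) * inverse n, (2 * x1 * x3) * inverse n, (2 * x1 * x4) * inverse n)"
    by (simp add: quat_div_conj_def x n_def r_def)
  moreover have "quat_norm a b (r, 2 * x1 * x2, 2 * x1 * x3, 2 * x1 * x4) = n * n"
    unfolding r_def n_def x quat_norm_def by simp algebra
  ultimately show ?thesis
    using assms by (simp only: scale flip: n_def) (simp add: field_simps)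
qed

lemma quat_norm_one_plus:
  fixes a b :: "'a::comm_ring_1"
  assumes "quat_norm a b y = 1"
  shows "quat_norm a b (1 + quat_re y, quat_i y, quat_j y, quat_k y) = 2 * (1 + quat_re y)"
  using assms by (simp add: quat_norm_def algebra_simps)

lemma quat_div_conj_one_plus:
  fixes a b :: "'a::field_char_0"
  assumes norm: "quat_norm a b y = 1" and re: "quat_re y \<noteq> - 1"
  shows "quat_div_conj a b (1 + quat_re y, quat_i y, quat_j y, quat_k y) = y"
proof -
  obtain y1 y2 y3 y4 where y: "y = (y1, y2, y3, y4)"
    by (metis prod_cases4)
  have n: "y1 * y1 - a * (y2 * y2) - b * (y3 * y3) + a * b * (y4 * y4) = 1"
    using norm by (simp add: y quat_norm_def)
  have "1 + y1 \<noteq> 0"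
    using re y by (auto simp: add_eq_0_iff)
  then have nz: "2 * (1 + y1) \<noteq> 0"
    by (simp only: mult_eq_0_iff) simp
  have "quat_norm a b (1 + y1, y2, y3, y4) = 2 * (1 + y1)"
    using quat_norm_one_plus[OF norm] by (simp add: y)
  moreover have "(1 + y1) * (1 + y1) + a * (y2 * y2) + b * (y3 * y3) - a * b * (y4 * y4) = 2 * (1 + y1) * y1"
    using n by (simp add: algebra_simps)
  ultimately show ?thesis
    using nz by (simp add: y quat_div_conj_def field_simps)
qed

context padic_field
begin

definition padic_nhds :: "'k quad \<Rightarrow> 'k quad filter" where
  "padic_nhds z = (INF M. principal {q. entries_val_ge M (q - z)})"

definition padic_cont :: "('k quad \<Rightarrow> 'k) \<Rightarrow> 'k quad \<Rightarrow> bool" where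
  "padic_cont F z \<longleftrightarrow> (\<forall>N. eventually (\<lambda>q. val_ge N (F q - F z)) (padic_nhds z))"

lemma eventually_padic_nhds:
  "eventually P (padic_nhds z) \<longleftrightarrow> (\<exists>M. \<forall>q. entries_val_ge M (q - z) \<longrightarrow> P q)"
proof -
  have "\<exists>M. principal {q. entries_val_ge M (q - z)} \<le>
      inf (principal {q. entries_val_ge M1 (q - z)}) (principal {q. entries_val_ge M2 (q - z)})" for M1 M2
    by (intro exI[of _ "max M1 M2"]) (auto intro: entries_val_ge_mono)
  then show ?thesis
    unfolding padic_nhds_def by (subst eventually_INF_base) (auto simp: eventually_principal)
qed

lemma eventually_padic_nhds_rat:
  assumes "eventually P (padic_nhds z)"
  shows "\<exists>q. P (of_rat_quad q)"
proof -
  obtain M where M: "\<And>q. entries_val_ge M (q - z) \<Longrightarrow> P q"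
    using assms unfolding eventually_padic_nhds by blast
  obtain a b c d where z: "z = (a, b, c, d)"
    by (metis prod_cases4)
  obtain q1 q2 q3 q4 where "val_ge M (of_rat q1 - a)" "val_ge M (of_rat q2 - b)"
      "val_ge M (of_rat q3 - c)" "val_ge M (of_rat q4 - d)"
    using ex_rat_close by metis
  then have "P (of_rat_quad (q1, q2, q3, q4))"
    by (intro M) (simp add: z)
  then show ?thesis ..
qed

lemma padic_cont_const: "padic_cont (\<lambda>q. c) z"
  unfolding padic_cont_def by simp

lemma entries_val_ge_diff_iff:
  "entries_val_ge M (q - z) \<longleftrightarrow> val_ge M (quat_re q - quat_re z) \<and> val_ge M (quat_i q - quat_i z) \<and>
    val_ge M (quat_j q - quat_j z) \<and> val_ge M (quat_k q - quat_k z)"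
  by (cases q; cases z) simp

lemma padic_cont_coords:
  "padic_cont quat_re z" "padic_cont quat_i z" "padic_cont quat_j z" "padic_cont quat_k z"
  unfolding padic_cont_def eventually_padic_nhds entries_val_ge_diff_iff by blast+

lemma padic_cont_add:
  assumes "padic_cont F z" "padic_cont G z"
  shows "padic_cont (\<lambda>q. F q + G q) z"
  unfolding padic_cont_def
proof
  fix N
  have "eventually (\<lambda>q. val_ge N (F q - F z) \<and> val_ge N (G q - G z)) (padic_nhds z)"
    using assms unfolding padic_cont_def by (simp add: eventually_conj_iff)
  then show "eventually (\<lambda>q. val_ge N (F q + G q - (F z + G z))) (padic_nhds z)"
    by eventually_elim (metis val_ge_add add_diff_add)
qed

lemma padic_cont_uminus: "padic_cont (\<lambda>q. - F q) z" if "padic_cont F z"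
proof -
  have "val_ge N (- F q - - F z) \<longleftrightarrow> val_ge N (F q - F z)" for N q
    using val_ge_diff_commute by simp
  then show ?thesis
    using that unfolding padic_cont_def by simp
qed

lemma padic_cont_diff: "padic_cont F z \<Longrightarrow> padic_cont G z \<Longrightarrow> padic_cont (\<lambda>q. F q - G q) z"
  using padic_cont_add[of F z "\<lambda>q. - G q"] padic_cont_uminus[of G z] by simp

lemma padic_cont_mult:
  assumes F: "padic_cont F z" and G: "padic_cont G z"
  shows "padic_cont (\<lambda>q. F q * G q) z"
  unfolding padic_cont_def
proof
  fix N
  obtain K where K: "K \<le> 0" "val_ge K (F z)" "val_ge K (G z)"
    using ex_val_ge_le[of 0 "F z"] ex_val_ge_le[of 0 "G z"]
    by (metis min.cobounded1 min.cobounded2 min.bounded_iff val_ge_mono)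
  define T where "T = max N 0 - K"
  have "eventually (\<lambda>q. val_ge T (F q - F z) \<and> val_ge T (G q - G z)) (padic_nhds z)"
    using F G unfolding padic_cont_def by (simp add: eventually_conj_iff)
  then show "eventually (\<lambda>q. val_ge N (F q * G q - F z * G z)) (padic_nhds z)"
  proof eventually_elim
    case (elim q)
    then have "val_ge K (F q - F z)"
      using K(1) by (auto simp: T_def intro: val_ge_mono)
    then have "val_ge K (F q)"
      using val_ge_add[OF K(2)] by fastforce
    then have "val_ge (K + T) (F q * (G q - G z))" "val_ge (T + K) ((F q - F z) * G z)"
      using val_ge_mult elim K(3) by blast+
    then have "val_ge (max N 0) (F q * (G q - G z) + (F q - F z) * G z)"
      unfolding T_def by (intro val_ge_add) simp_all
    then show ?case
      by (auto simp: algebra_simps intro: val_ge_mono)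
  qed
qed

lemma padic_cont_inverse:
  assumes F: "padic_cont F z" and nz: "F z \<noteq> 0"
  shows "padic_cont (\<lambda>q. inverse (F q)) z"
  unfolding padic_cont_def
proof
  fix N
  define a where "a = v (F z)"
  define T where "T = max (N + 2 * a) (a + 1)"
  have "eventually (\<lambda>q. val_ge T (F q - F z)) (padic_nhds z)"
    using F unfolding padic_cont_def by blast
  then show "eventually (\<lambda>q. val_ge N (inverse (F q) - inverse (F z))) (padic_nhds z)"
  proof eventually_elim
    case (elim q)
    then have "val_ge (v (F z) + 1) (F q - F z)"
      by (rule val_ge_mono) (simp add: T_def a_def)
    then have Fq: "F q \<noteq> 0" "v (F q) = a"
      using v_eq_if_close[OF nz] unfolding a_def by blast+
    have "val_ge (T + - a + - a) ((F z - F q) * inverse (F q) * inverse (F z))"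
      using val_ge_inverse[OF Fq(1)] val_ge_inverse[OF nz] elim
      by (intro val_ge_mult) (simp_all add: Fq(2) a_def val_ge_diff_commute)
    moreover have "inverse (F q) - inverse (F z) = (F z - F q) * inverse (F q) * inverse (F z)"
      using Fq(1) nz by (simp add: field_simps)
    ultimately show ?case
      by (auto intro: val_ge_mono simp: T_def)
  qed
qed

lemma padic_cont_quat_norm: "padic_cont (quat_norm A B) z"
  unfolding quat_norm_def[abs_def]
  by (intro padic_cont_add padic_cont_diff padic_cont_mult padic_cont_const padic_cont_coords)

lemma padic_cont_quat_div_conj:
  assumes "quat_norm A B z \<noteq> 0"
  shows "padic_cont (\<lambda>q. quat_re (quat_div_conj A B q)) z" "padic_cont (\<lambda>q. quat_i (quat_div_conj A B q)) z"
    "padic_cont (\<lambda>q. quat_j (quat_div_conj A B q)) z" "padic_cont (\<lambda>q. quat_k (quat_div_conj A B q)) z"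
  unfolding quat_div_conj_def quat_re.simps quat_i.simps quat_j.simps quat_k.simps
  using assms
  by (intro padic_cont_add padic_cont_diff padic_cont_mult padic_cont_const padic_cont_coords
      padic_cont_inverse padic_cont_quat_norm; assumption?)+

lemma ex_norm_one_rat_close_re_ne:
  assumes y: "quat_norm (of_rat \<alpha>) (of_rat \<beta>) y = 1" and re: "quat_re y \<noteq> - 1"
  shows "\<exists>x. qnorm \<alpha> \<beta> x = 1 \<and> entries_val_ge N (of_rat_quad x - y)"
proof -
  let ?A = "of_rat \<alpha> :: 'k" and ?B = "of_rat \<beta> :: 'k"
  define z where "z = (1 + quat_re y, quat_i y, quat_j y, quat_k y)"
  have z: "quat_norm ?A ?B z \<noteq> 0"
    using quat_norm_one_plus[OF y] re unfolding z_def by (auto simp: add_eq_0_iff)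
  have "eventually (\<lambda>q. val_ge (v (quat_norm ?A ?B z) + 1) (quat_norm ?A ?B q - quat_norm ?A ?B z)) (padic_nhds z)"
    using padic_cont_quat_norm unfolding padic_cont_def by blast
  moreover have "eventually (\<lambda>q. entries_val_ge N (quat_div_conj ?A ?B q - quat_div_conj ?A ?B z)) (padic_nhds z)"
    using padic_cont_quat_div_conj[OF z] unfolding padic_cont_def entries_val_ge_diff_iff
    by (simp add: eventually_conj_iff)
  moreover have "quat_div_conj ?A ?B z = y"
    unfolding z_def using quat_div_conj_one_plus[OF y re] .
  ultimately have "eventually (\<lambda>q. quat_norm ?A ?B q \<noteq> 0 \<and> entries_val_ge N (quat_div_conj ?A ?B q - y)) (padic_nhds z)"
    by (auto elim: eventually_mono dest: v_eq_if_close(1)[OF z] simp: eventually_conj_iff)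
  then obtain q where q: "quat_norm ?A ?B (of_rat_quad q) \<noteq> 0"
      "entries_val_ge N (quat_div_conj ?A ?B (of_rat_quad q) - y)"
    using eventually_padic_nhds_rat by blast
  have "quat_norm \<alpha> \<beta> q \<noteq> 0"
    using q(1) by (simp flip: of_rat_quat_norm)
  then have "qnorm \<alpha> \<beta> (quat_div_conj \<alpha> \<beta> q) = 1"
    by (simp add: qnorm_eq_quat_norm quat_norm_div_conj)
  moreover have "entries_val_ge N (of_rat_quad (quat_div_conj \<alpha> \<beta> q) - y)"
    using q(2) by (simp add: of_rat_quad_div_conj)
  ultimately show ?thesis
    by blast
qed

lemma ex_norm_one_rat_close:
  assumes y: "quat_norm (of_rat \<alpha>) (of_rat \<beta>) y = 1"
  shows "\<exists>x. qnorm \<alpha> \<beta> x = 1 \<and> entries_val_ge N (of_rat_quad x - y)"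
proof (cases "quat_re y = - 1")
  case True
  have "quat_norm (of_rat \<alpha>) (of_rat \<beta>) (- y) = 1" "quat_re (- y) \<noteq> - 1"
    using y True by (cases y; simp add: quat_norm_def)+
  then obtain x where "qnorm \<alpha> \<beta> x = 1" "entries_val_ge N (of_rat_quad x - - y)"
    using ex_norm_one_rat_close_re_ne by blast
  moreover have "qnorm \<alpha> \<beta> (- x) = qnorm \<alpha> \<beta> x" "of_rat_quad (- x) - y = - (of_rat_quad x - - y)"
    by (cases x; cases y; simp add: of_rat_minus)+
  moreover have "entries_val_ge N (- d) \<longleftrightarrow> entries_val_ge N d" for d
    by (cases d) simp
  ultimately show ?thesis
    by (metis (no_types))
qed (use ex_norm_one_rat_close_re_ne y in blast)

end

locale split_quaternions = padic_field p v for p :: nat and v :: "'k::field_char_0 \<Rightarrow> int" +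
  fixes \<alpha> \<beta> :: rat and s :: 'k
  assumes s_square: "s * s = of_rat \<alpha>" and \<alpha>_nonzero: "\<alpha> \<noteq> 0" and \<beta>_nonzero: "\<beta> \<noteq> 0"
begin

definition quat_matrix :: "'k quad \<Rightarrow> 'k mat2" where
  "quat_matrix y = (quat_re y + quat_i y * s, of_rat \<beta> * (quat_j y + quat_k y * s),
     quat_j y - quat_k y * s, quat_re y - quat_i y * s)"

lemma mat_det_quat_matrix: "mat_det (quat_matrix y) = quat_norm (of_rat \<alpha>) (of_rat \<beta>) y"
  by (simp add: quat_matrix_def quat_norm_def algebra_simps flip: s_square)

lemma quat_mat_act_eq: "quat_mat_act \<beta> s x = mat_apply (quat_matrix (of_rat_quad x))"
  by (rule ext, cases x) (auto simp: quat_matrix_def algebra_simps)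

lemma quat_matrix_surj: "\<exists>y. quat_matrix y = h"
proof -
  obtain h1 h2 h3 h4 where h: "h = (h1, h2, h3, h4)"
    by (metis prod_cases4)
  have "s \<noteq> 0"
    using s_square \<alpha>_nonzero by auto
  then have "quat_matrix ((h1 + h4) / 2, (h1 - h4) / (2 * s), (h3 + h2 / of_rat \<beta>) / 2,
      (h2 / of_rat \<beta> - h3) / (2 * s)) = h"
    using \<beta>_nonzero unfolding h quat_matrix_def by (simp add: field_simps)
  then show ?thesis ..
qed

lemma quat_matrix_add: "quat_matrix (y + d) = quat_matrix y + quat_matrix d"
  by (cases y; cases d) (simp add: quat_matrix_def algebra_simps)

lemma entries_val_ge_quat_matrix:
  assumes d: "entries_val_ge M d" and K: "K \<le> 0" "val_ge K s" "val_ge K (of_rat \<beta>)"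
  shows "entries_val_ge (M + K + K) (quat_matrix d)"
proof -
  have "val_ge (M + K + K) a" if "val_ge M a" for a
    using that K(1) by (auto intro: val_ge_mono)
  moreover have "val_ge (M + K + K) (a * s)" if "val_ge M a" for a
    using val_ge_mult[OF that K(2)] K(1) by (auto intro: val_ge_mono)
  moreover have "val_ge (M + K + K) (of_rat \<beta> * (a + b * s))" if "val_ge M a" "val_ge M b" for a b
    using val_ge_mult[OF K(3) val_ge_add[OF val_ge_mono[OF that(1)] val_ge_mult[OF that(2) K(2)]]] K(1)
    by (simp add: algebra_simps)
  ultimately show ?thesis
    using d by (cases d) (auto simp: quat_matrix_def intro: val_ge_add val_ge_diff)
qed

lemma ex_norm_one_near:
  assumes h: "mat_det h = 1"
  shows "\<exists>x. qnorm \<alpha> \<beta> x = 1 \<and> near_one N (mat_mult (quat_matrix (of_rat_quad x)) (mat_inv h))"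
proof -
  obtain y where y: "quat_matrix y = h"
    using quat_matrix_surj by blast
  obtain K where K: "K \<le> 0" "val_ge K s" "val_ge K (of_rat \<beta>)"
    using ex_val_ge_le[of 0 s] ex_val_ge_le[of 0 "of_rat \<beta> :: 'k"]
    by (metis min.cobounded1 min.cobounded2 min.bounded_iff val_ge_mono)
  obtain K' where K': "entries_val_ge K' (mat_inv h)"
    using ex_entries_val_ge_le by blast
  have "quat_norm (of_rat \<alpha>) (of_rat \<beta>) y = 1"
    using h y mat_det_quat_matrix by metis
  then obtain x where x: "qnorm \<alpha> \<beta> x = 1" "entries_val_ge (N - K - K - K') (of_rat_quad x - y)"
    using ex_norm_one_rat_close by blast
  define W where "W = mat_mult (quat_matrix (of_rat_quad x - y)) (mat_inv h)"
  have "entries_val_ge (N - K - K - K' + K + K + K') W"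
    unfolding W_def using entries_val_ge_quat_matrix[OF x(2) K] K' by (rule entries_val_ge_mult)
  moreover have "mat_mult (quat_matrix (of_rat_quad x)) (mat_inv h) = mat_one + W"
    using quat_matrix_add[of y "of_rat_quad x - y"] mat_mult_inv_right[of h] h y
    by (simp add: W_def mat_mult_add_left)
  ultimately have "near_one N (mat_mult (quat_matrix (of_rat_quad x)) (mat_inv h))"
    by (simp add: near_one_def)
  with x(1) show ?thesis
    by blast
qed

text \<open>Approximate the element of \<open>SL\<^sub>2(\<bbbQ>\<^sub>p)\<close> given by Weyl transitivity of \<open>SL\<^sub>2\<close> by an
  element of \<open>G\<close>, closely enough that the error lies in the (open) stabiliser of the target chambers.\<close>

theorem weyl_transitive_norm_one_group: "weyl_transitive p v (normone \<alpha> \<beta>) (quat_mat_act \<beta> s)"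
  unfolding weyl_transitive_def
proof (intro allI impI)
  fix w C1 C1' C2 C2'
  assume H: "is_chamber p v C1 \<and> is_chamber p v C1' \<and> is_chamber p v C2 \<and> is_chamber p v C2' \<and>
    weyl_dist p v C1 C1' w \<and> weyl_dist p v C2 C2' w"
  obtain h where h: "mat_det h = 1" "chamber_act (mat_apply h) C1 = C2" "chamber_act (mat_apply h) C1' = C2'"
    using sl2_weyl_transitive H by blast
  obtain N2 N2' where
    "\<forall>E. mat_det E = 1 \<and> near_one N2 E \<longrightarrow> chamber_act (mat_apply E) C2 = C2"
    "\<forall>E. mat_det E = 1 \<and> near_one N2' E \<longrightarrow> chamber_act (mat_apply E) C2' = C2'"
    using stabilizer_chamber_open H by metis
  then have stab: "chamber_act (mat_apply E) C2 = C2" "chamber_act (mat_apply E) C2' = C2'"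
    if "mat_det E = 1" "near_one (max N2 N2') E" for E
    using that by (meson max.cobounded1 max.cobounded2 near_one_mono)+
  obtain x where x: "qnorm \<alpha> \<beta> x = 1" "near_one (max N2 N2') (mat_mult (quat_matrix (of_rat_quad x)) (mat_inv h))"
    using ex_norm_one_near[OF h(1)] by blast
  define E where "E = mat_mult (quat_matrix (of_rat_quad x)) (mat_inv h)"
  have "mat_det E = 1"
    unfolding E_def using x(1) h(1)
    by (simp add: mat_det_mult mat_det_inv mat_det_quat_matrix qnorm_eq_quat_norm flip: of_rat_quat_norm)
  then have "chamber_act (mat_apply E) C2 = C2" "chamber_act (mat_apply E) C2' = C2'"
    using stab x(2) unfolding E_def by blast+
  moreover have "quat_mat_act \<beta> s x = mat_apply (mat_mult E h)"
    unfolding E_def quat_mat_act_eq using mat_mult_inv_left[of h] h(1) by (simp add: mat_mult_assoc)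
  ultimately have "chamber_act (quat_mat_act \<beta> s x) C1 = C2" "chamber_act (quat_mat_act \<beta> s x) C1' = C2'"
    using h(2,3) by (simp_all add: chamber_act_mult)
  moreover have "x \<in> normone \<alpha> \<beta>"
    using x(1) by (simp add: normone_def)
  ultimately show "\<exists>g\<in>normone \<alpha> \<beta>. chamber_act (quat_mat_act \<beta> s g) C1 = C2 \<and> chamber_act (quat_mat_act \<beta> s g) C1' = C2'"
    by blast
qed

end

theorem proposition3:
  fixes \<alpha> \<beta> :: rat and p :: nat and v :: "'k::field_char_0 \<Rightarrow> int" and s :: 'k
  assumes "quat_division_algebra \<alpha> \<beta>"
    and "prime p" and "p \<noteq> 2"
    and "pval p \<alpha> = 0" and "pval p \<beta> = 0"
    and "is_Qp p v"
    and "s * s = of_rat \<alpha>"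
  shows "weyl_transitive p v (normone \<alpha> \<beta>) (quat_mat_act \<beta> s)"
proof -
  interpret split_quaternions p v \<alpha> \<beta> s
    using assms by unfold_locales (auto simp: quat_division_algebra_def)
  show ?thesis
    by (rule weyl_transitive_norm_one_group)
qed

end
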